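(* Let $\mathbb{C}$ be a pointed protomodular category in which centralizers of Bourn-normal monomorphisms exist and are Bourn-normal monomorphisms. Suppose $A$ is an abelian and complete${}^*$ object of $\mathbb{C}$ and $B$ is a strong-complete object of $\mathbb{C}$. If $\hom(B,A)=\{0\}$, then $B\times A$ is complete${}^*$.
   Context: A pointed category with finite limits is protomodular if the split short five lemma holds. Morphisms $f:A'\to X$, $g:B'\to X$ commute if some $\varphi:A'\times B'\to X$ has $\varphi\langle1,0\rangle=f$, $\varphi\langle0,1\rangle=g$; the centralizer $z_f:Z_X(A',f)\to X$ of $f$ is the terminal object among morphisms into $X$ commuting with $f$. An object $A$ is abelian if $1_A$ commutes with $1_A$. A protosplit monomorphism is a kernel of a split epimorphism; a monomorphism $m:S\to Y$ is Bourn-normal if there is an equivalence relation $(R,r_1,r_2)$ on $Y$ and $\tilde m:S\times S\to R$ with $r_1\tilde m=m\pi_1$, $r_2\tilde m=m\pi_2$ and the square $r_1\tilde m=m\pi_1$ a pullback. An object $X$ is complete${}^*$ if every Bourn-normal monomorphism with domain $X$ is a split monomorphism, and strong-complete if every protosplit monomorphism with domain $X$ is a split monomorphism with a unique retraction. *)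

theory Defs
  imports Main
begin

text \<open>A (possibly large) category presented by its object set, arrow set,
domain, codomain, identities and composition; Cmp C g f is g after f.\<close>

record ('o, 'm) cat =
  Ob  :: "'o set"
  Ar  :: "'m set"
  Dom :: "'m \<Rightarrow> 'o"
  Cod :: "'m \<Rightarrow> 'o"
  Idm :: "'o \<Rightarrow> 'm"
  Cmp :: "'m \<Rightarrow> 'm \<Rightarrow> 'm"

definition hom :: "('o, 'm) cat \<Rightarrow> 'o \<Rightarrow> 'o \<Rightarrow> 'm set" where
  "hom C X Y = {f \<in> Ar C. Dom C f = X \<and> Cod C f = Y}"

definition category :: "('o, 'm) cat \<Rightarrow> bool" where
  "category C \<longleftrightarrow>
     (\<forall>f \<in> Ar C. Dom C f \<in> Ob C \<and> Cod C f \<in> Ob C) \<and>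
     (\<forall>X \<in> Ob C. Idm C X \<in> hom C X X) \<and>
     (\<forall>X \<in> Ob C. \<forall>Y \<in> Ob C. \<forall>Z \<in> Ob C. \<forall>f \<in> hom C X Y. \<forall>g \<in> hom C Y Z.
        Cmp C g f \<in> hom C X Z) \<and>
     (\<forall>X \<in> Ob C. \<forall>Y \<in> Ob C. \<forall>f \<in> hom C X Y.
        Cmp C (Idm C Y) f = f \<and> Cmp C f (Idm C X) = f) \<and>
     (\<forall>W \<in> Ob C. \<forall>X \<in> Ob C. \<forall>Y \<in> Ob C. \<forall>Z \<in> Ob C.
        \<forall>f \<in> hom C W X. \<forall>g \<in> hom C X Y. \<forall>h \<in> hom C Y Z.
        Cmp C h (Cmp C g f) = Cmp C (Cmp C h g) f)"

definition is_terminal :: "('o, 'm) cat \<Rightarrow> 'o \<Rightarrow> bool" where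
  "is_terminal C T \<longleftrightarrow> T \<in> Ob C \<and> (\<forall>X \<in> Ob C. \<exists>!f. f \<in> hom C X T)"

definition is_initial :: "('o, 'm) cat \<Rightarrow> 'o \<Rightarrow> bool" where
  "is_initial C I \<longleftrightarrow> I \<in> Ob C \<and> (\<forall>X \<in> Ob C. \<exists>!f. f \<in> hom C I X)"

definition is_zero_obj :: "('o, 'm) cat \<Rightarrow> 'o \<Rightarrow> bool" where
  "is_zero_obj C Z \<longleftrightarrow> is_initial C Z \<and> is_terminal C Z"

definition pointed :: "('o, 'm) cat \<Rightarrow> bool" where
  "pointed C \<longleftrightarrow> category C \<and> (\<exists>Z. is_zero_obj C Z)"

definition zero_mor :: "('o, 'm) cat \<Rightarrow> 'o \<Rightarrow> 'o \<Rightarrow> 'm" where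
  "zero_mor C X Y = (THE f. f \<in> hom C X Y \<and>
      (\<exists>Z. is_zero_obj C Z \<and> (\<exists>a \<in> hom C X Z. \<exists>b \<in> hom C Z Y. f = Cmp C b a)))"

definition is_pullback :: "('o, 'm) cat \<Rightarrow> 'm \<Rightarrow> 'm \<Rightarrow> 'm \<Rightarrow> 'm \<Rightarrow> bool" where
  "is_pullback C f g p q \<longleftrightarrow>
     f \<in> Ar C \<and> g \<in> Ar C \<and> p \<in> Ar C \<and> q \<in> Ar C \<and>
     Cod C f = Cod C g \<and> Dom C p = Dom C q \<and>
     Cod C p = Dom C f \<and> Cod C q = Dom C g \<and> Cmp C f p = Cmp C g q \<and>
     (\<forall>W \<in> Ob C. \<forall>a \<in> hom C W (Dom C f). \<forall>b \<in> hom C W (Dom C g).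
        Cmp C f a = Cmp C g b \<longrightarrow>
        (\<exists>!h. h \<in> hom C W (Dom C p) \<and> Cmp C p h = a \<and> Cmp C q h = b))"

definition has_finite_limits :: "('o, 'm) cat \<Rightarrow> bool" where
  "has_finite_limits C \<longleftrightarrow> (\<exists>T. is_terminal C T) \<and>
     (\<forall>f \<in> Ar C. \<forall>g \<in> Ar C. Cod C f = Cod C g \<longrightarrow> (\<exists>p q. is_pullback C f g p q))"

definition is_product :: "('o, 'm) cat \<Rightarrow> 'o \<Rightarrow> 'o \<Rightarrow> 'o \<Rightarrow> 'm \<Rightarrow> 'm \<Rightarrow> bool" where
  "is_product C A B P p1 p2 \<longleftrightarrow>
     A \<in> Ob C \<and> B \<in> Ob C \<and> P \<in> Ob C \<and> p1 \<in> hom C P A \<and> p2 \<in> hom C P B \<and>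
     (\<forall>W \<in> Ob C. \<forall>a \<in> hom C W A. \<forall>b \<in> hom C W B.
        (\<exists>!h. h \<in> hom C W P \<and> Cmp C p1 h = a \<and> Cmp C p2 h = b))"

definition is_iso :: "('o, 'm) cat \<Rightarrow> 'm \<Rightarrow> bool" where
  "is_iso C f \<longleftrightarrow> f \<in> Ar C \<and> (\<exists>g \<in> hom C (Cod C f) (Dom C f).
      Cmp C g f = Idm C (Dom C f) \<and> Cmp C f g = Idm C (Cod C f))"

definition is_mono :: "('o, 'm) cat \<Rightarrow> 'm \<Rightarrow> bool" where
  "is_mono C m \<longleftrightarrow> m \<in> Ar C \<and> (\<forall>W \<in> Ob C. \<forall>a \<in> hom C W (Dom C m).
      \<forall>b \<in> hom C W (Dom C m). Cmp C m a = Cmp C m b \<longrightarrow> a = b)"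

definition is_split_mono :: "('o, 'm) cat \<Rightarrow> 'm \<Rightarrow> bool" where
  "is_split_mono C m \<longleftrightarrow> m \<in> Ar C \<and>
     (\<exists>r \<in> hom C (Cod C m) (Dom C m). Cmp C r m = Idm C (Dom C m))"

definition is_split_epi :: "('o, 'm) cat \<Rightarrow> 'm \<Rightarrow> bool" where
  "is_split_epi C p \<longleftrightarrow> p \<in> Ar C \<and>
     (\<exists>s \<in> hom C (Cod C p) (Dom C p). Cmp C p s = Idm C (Cod C p))"

definition is_kernel :: "('o, 'm) cat \<Rightarrow> 'm \<Rightarrow> 'm \<Rightarrow> bool" where
  "is_kernel C k p \<longleftrightarrow> k \<in> Ar C \<and> p \<in> Ar C \<and> Cod C k = Dom C p \<and>
     Cmp C p k = zero_mor C (Dom C k) (Cod C p) \<and>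
     (\<forall>W \<in> Ob C. \<forall>g \<in> hom C W (Dom C p). Cmp C p g = zero_mor C W (Cod C p) \<longrightarrow>
        (\<exists>!h. h \<in> hom C W (Dom C k) \<and> Cmp C k h = g))"

definition split_short_five :: "('o, 'm) cat \<Rightarrow> bool" where
  "split_short_five C \<longleftrightarrow>
     (\<forall>k p s k' p' s' u v w.
        is_kernel C k p \<and> s \<in> hom C (Cod C p) (Dom C p) \<and> Cmp C p s = Idm C (Cod C p) \<and>
        is_kernel C k' p' \<and> s' \<in> hom C (Cod C p') (Dom C p') \<and> Cmp C p' s' = Idm C (Cod C p') \<and>
        u \<in> hom C (Dom C k) (Dom C k') \<and> v \<in> hom C (Dom C p) (Dom C p') \<and>
        w \<in> hom C (Cod C p) (Cod C p') \<and>
        Cmp C v k = Cmp C k' u \<and> Cmp C p' v = Cmp C w p \<and> Cmp C v s = Cmp C s' w \<and>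
        is_iso C u \<and> is_iso C w \<longrightarrow> is_iso C v)"

definition protomodular :: "('o, 'm) cat \<Rightarrow> bool" where
  "protomodular C \<longleftrightarrow> pointed C \<and> has_finite_limits C \<and> split_short_five C"

definition commute :: "('o, 'm) cat \<Rightarrow> 'm \<Rightarrow> 'm \<Rightarrow> bool" where
  "commute C f g \<longleftrightarrow> f \<in> Ar C \<and> g \<in> Ar C \<and> Cod C f = Cod C g \<and>
     (\<exists>P p1 p2 i1 i2 \<phi>. is_product C (Dom C f) (Dom C g) P p1 p2 \<and>
        i1 \<in> hom C (Dom C f) P \<and> Cmp C p1 i1 = Idm C (Dom C f) \<and>
        Cmp C p2 i1 = zero_mor C (Dom C f) (Dom C g) \<and>
        i2 \<in> hom C (Dom C g) P \<and> Cmp C p1 i2 = zero_mor C (Dom C g) (Dom C f) \<and>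
        Cmp C p2 i2 = Idm C (Dom C g) \<and>
        \<phi> \<in> hom C P (Cod C f) \<and> Cmp C \<phi> i1 = f \<and> Cmp C \<phi> i2 = g)"

definition is_centralizer :: "('o, 'm) cat \<Rightarrow> 'm \<Rightarrow> 'm \<Rightarrow> bool" where
  "is_centralizer C f z \<longleftrightarrow> commute C f z \<and>
     (\<forall>g \<in> Ar C. commute C f g \<longrightarrow>
        (\<exists>!h. h \<in> hom C (Dom C g) (Dom C z) \<and> Cmp C z h = g))"

definition abelian_obj :: "('o, 'm) cat \<Rightarrow> 'o \<Rightarrow> bool" where
  "abelian_obj C A \<longleftrightarrow> A \<in> Ob C \<and> commute C (Idm C A) (Idm C A)"

definition is_equiv_rel :: "('o, 'm) cat \<Rightarrow> 'o \<Rightarrow> 'o \<Rightarrow> 'm \<Rightarrow> 'm \<Rightarrow> bool" where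
  "is_equiv_rel C Y R r1 r2 \<longleftrightarrow>
     r1 \<in> hom C R Y \<and> r2 \<in> hom C R Y \<and>
     (\<forall>W \<in> Ob C. \<forall>a \<in> hom C W R. \<forall>b \<in> hom C W R.
        Cmp C r1 a = Cmp C r1 b \<and> Cmp C r2 a = Cmp C r2 b \<longrightarrow> a = b) \<and>
     (\<exists>d \<in> hom C Y R. Cmp C r1 d = Idm C Y \<and> Cmp C r2 d = Idm C Y) \<and>
     (\<exists>\<sigma> \<in> hom C R R. Cmp C r1 \<sigma> = r2 \<and> Cmp C r2 \<sigma> = r1) \<and>
     (\<forall>q1 q2. is_pullback C r2 r1 q1 q2 \<longrightarrow>
        (\<exists>\<tau> \<in> hom C (Dom C q1) R. Cmp C r1 \<tau> = Cmp C r1 q1 \<and> Cmp C r2 \<tau> = Cmp C r2 q2))"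

definition bourn_normal :: "('o, 'm) cat \<Rightarrow> 'm \<Rightarrow> bool" where
  "bourn_normal C m \<longleftrightarrow> is_mono C m \<and>
     (\<exists>R r1 r2 P \<pi>1 \<pi>2 mt. is_equiv_rel C (Cod C m) R r1 r2 \<and>
        is_product C (Dom C m) (Dom C m) P \<pi>1 \<pi>2 \<and> mt \<in> hom C P R \<and>
        Cmp C r1 mt = Cmp C m \<pi>1 \<and> Cmp C r2 mt = Cmp C m \<pi>2 \<and>
        is_pullback C r1 m mt \<pi>1)"

definition protosplit_mono :: "('o, 'm) cat \<Rightarrow> 'm \<Rightarrow> bool" where
  "protosplit_mono C m \<longleftrightarrow> (\<exists>p. is_split_epi C p \<and> is_kernel C m p)"

definition complete_star :: "('o, 'm) cat \<Rightarrow> 'o \<Rightarrow> bool" where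
  "complete_star C X \<longleftrightarrow> X \<in> Ob C \<and>
     (\<forall>m. bourn_normal C m \<and> Dom C m = X \<longrightarrow> is_split_mono C m)"

definition strong_complete :: "('o, 'm) cat \<Rightarrow> 'o \<Rightarrow> bool" where
  "strong_complete C X \<longleftrightarrow> X \<in> Ob C \<and>
     (\<forall>m. protosplit_mono C m \<and> Dom C m = X \<longrightarrow>
        (\<exists>!r. r \<in> hom C (Cod C m) X \<and> Cmp C r m = Idm C X))"

end

theory Submission
  imports Defs
begin

text \<open>Let \<open>m : B \<times> A \<rightarrow> Y\<close> be Bourn-normal; it suffices to retract \<open>m\<close> onto both factors.
  Since \<open>A\<close> is abelian, \<open>m \<circ> inj2\<close> commutes with \<open>m\<close> and so factors through the normal centralizer
  \<open>z\<close> of \<open>m\<close>; strong completeness of \<open>B\<close> shows that every part of \<open>m\<close> commuting with \<open>m\<close> lies in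
  \<open>A\<close>, so \<open>A\<close> is the intersection of \<open>m\<close> and \<open>z\<close>. Intersections of normal monomorphisms are
  normal, so completeness* of \<open>A\<close> yields \<open>\<alpha> : Y \<rightarrow> A\<close> with \<open>\<alpha> m inj2 = 1\<close>, and \<open>\<alpha> m = p2\<close>
  because \<open>hom(B, A) = 0\<close>. Dually \<open>B\<close> is the intersection of \<open>m\<close> with the (normal) kernel of \<open>\<alpha>\<close>,
  and a strong-complete object is complete*, which yields \<open>\<beta>\<close> with \<open>\<beta> m = p1\<close>. Then
  \<open>\<langle>\<beta>, \<alpha>\<rangle> m = 1\<close>.\<close>

section \<open>Pointed protomodular categories\<close>

locale protomodular_category =
  fixes C :: "('o, 'm) cat"
  assumes protomodular: "protomodular C"
begin

abbreviation cmp (infixr "\<cdot>" 70) where "g \<cdot> f \<equiv> Cmp C g f"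

lemma is_category: "category C"
  using protomodular unfolding protomodular_def pointed_def by blast

lemma in_hom_iff [simp]: "f \<in> hom C X Y \<longleftrightarrow> f \<in> Ar C \<and> Dom C f = X \<and> Cod C f = Y"
  unfolding hom_def by blast

lemma Dom_in_Ob [simp]: "f \<in> Ar C \<Longrightarrow> Dom C f \<in> Ob C"
  using is_category unfolding category_def by blast

lemma Cod_in_Ob [simp]: "f \<in> Ar C \<Longrightarrow> Cod C f \<in> Ob C"
  using is_category unfolding category_def by blast

lemma Idm_in_Ar [simp]: "X \<in> Ob C \<Longrightarrow> Idm C X \<in> Ar C"
  and Dom_Idm [simp]: "X \<in> Ob C \<Longrightarrow> Dom C (Idm C X) = X"
  and Cod_Idm [simp]: "X \<in> Ob C \<Longrightarrow> Cod C (Idm C X) = X"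
  using is_category unfolding category_def hom_def by blast+

lemma comp_in_hom: "X \<in> Ob C \<Longrightarrow> Y \<in> Ob C \<Longrightarrow> Z \<in> Ob C \<Longrightarrow> f \<in> hom C X Y \<Longrightarrow> g \<in> hom C Y Z \<Longrightarrow>
   g \<cdot> f \<in> hom C X Z"
  using is_category unfolding category_def by blast

lemma comp_in_Ar [simp]: "f \<in> Ar C \<Longrightarrow> g \<in> Ar C \<Longrightarrow> Cod C f = Dom C g \<Longrightarrow> g \<cdot> f \<in> Ar C"
  and Dom_comp [simp]: "f \<in> Ar C \<Longrightarrow> g \<in> Ar C \<Longrightarrow> Cod C f = Dom C g \<Longrightarrow> Dom C (g \<cdot> f) = Dom C f"
  and Cod_comp [simp]: "f \<in> Ar C \<Longrightarrow> g \<in> Ar C \<Longrightarrow> Cod C f = Dom C g \<Longrightarrow> Cod C (g \<cdot> f) = Cod C g"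
  using comp_in_hom[of "Dom C f" "Cod C f" "Cod C g" f g] by (simp_all add: hom_def)

lemma category_identity: "X \<in> Ob C \<Longrightarrow> Y \<in> Ob C \<Longrightarrow> f \<in> hom C X Y \<Longrightarrow> Idm C Y \<cdot> f = f \<and> f \<cdot> Idm C X = f"
  using is_category unfolding category_def by blast

lemma Idm_comp [simp]: "f \<in> Ar C \<Longrightarrow> Cod C f = Y \<Longrightarrow> Idm C Y \<cdot> f = f"
  using category_identity[of "Dom C f" Y f] Cod_in_Ob[of f] Dom_in_Ob[of f] by simp

lemma comp_Idm [simp]: "f \<in> Ar C \<Longrightarrow> Dom C f = X \<Longrightarrow> f \<cdot> Idm C X = f"
  using category_identity[of X "Cod C f" f] Cod_in_Ob[of f] Dom_in_Ob[of f] by simp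

lemma category_assoc: "W \<in> Ob C \<Longrightarrow> X \<in> Ob C \<Longrightarrow> Y \<in> Ob C \<Longrightarrow> Z \<in> Ob C \<Longrightarrow>
   f \<in> hom C W X \<Longrightarrow> g \<in> hom C X Y \<Longrightarrow> h \<in> hom C Y Z \<Longrightarrow> h \<cdot> (g \<cdot> f) = (h \<cdot> g) \<cdot> f"
  using is_category unfolding category_def by blast

lemma comp_assoc [simp]: "f \<in> Ar C \<Longrightarrow> g \<in> Ar C \<Longrightarrow> h \<in> Ar C \<Longrightarrow> Cod C f = Dom C g \<Longrightarrow>
   Cod C g = Dom C h \<Longrightarrow> (h \<cdot> g) \<cdot> f = h \<cdot> g \<cdot> f"
  using category_assoc[of "Dom C f" "Dom C g" "Dom C h" "Cod C h" f g h] by (simp add: hom_def)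

lemma zero_object_exists: "\<exists>Z. is_zero_obj C Z"
  using protomodular unfolding protomodular_def pointed_def by blast

lemma terminal_arrow_unique: "is_terminal C T \<Longrightarrow> f \<in> hom C X T \<Longrightarrow> g \<in> hom C X T \<Longrightarrow> f = g"
proof -
  assume a: "is_terminal C T" "f \<in> hom C X T" "g \<in> hom C X T"
  then have "X \<in> Ob C" by auto
  then have "\<exists>!f. f \<in> hom C X T" using a(1) unfolding is_terminal_def by blast
  then show "f = g" using a(2,3) by blast
qed

lemma initial_arrow_unique: "is_initial C T \<Longrightarrow> f \<in> hom C T X \<Longrightarrow> g \<in> hom C T X \<Longrightarrow> f = g"
proof -
  assume a: "is_initial C T" "f \<in> hom C T X" "g \<in> hom C T X"
  then have "X \<in> Ob C" by auto
  then have "\<exists>!f. f \<in> hom C T X" using a(1) unfolding is_initial_def by blast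
  then show "f = g" using a(2,3) by blast
qed

lemma zero_factorisation_unique:
  assumes "is_zero_obj C Z1" "a1 \<in> hom C X Z1" "b1 \<in> hom C Z1 Y"
    "is_zero_obj C Z2" "a2 \<in> hom C X Z2" "b2 \<in> hom C Z2 Y"
  shows "b1 \<cdot> a1 = b2 \<cdot> a2"
proof -
  have Z: "Z1 \<in> Ob C" "Z2 \<in> Ob C" using assms unfolding is_zero_obj_def is_initial_def by auto
  have "\<exists>t. t \<in> hom C Z1 Z2" using assms(1) Z unfolding is_zero_obj_def is_initial_def by blast
  then obtain t where t: "t \<in> hom C Z1 Z2" by blast
  have "t \<cdot> a1 \<in> hom C X Z2" using t assms by auto
  hence e1: "a2 = t \<cdot> a1" using assms(4,5) terminal_arrow_unique unfolding is_zero_obj_def by blast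
  have "b2 \<cdot> t \<in> hom C Z1 Y" using t assms by auto
  hence e2: "b1 = b2 \<cdot> t" using assms(1,3) initial_arrow_unique unfolding is_zero_obj_def by blast
  show ?thesis using e1 e2 t assms by simp
qed

lemma zero_mor_eq_comp:
  assumes "is_zero_obj C Z" "a \<in> hom C X Z" "b \<in> hom C Z Y"
  shows "zero_mor C X Y = b \<cdot> a"
  unfolding zero_mor_def
proof (rule the_equality)
  have "b \<cdot> a \<in> hom C X Y" using assms by auto
  then show "b \<cdot> a \<in> hom C X Y \<and> (\<exists>Z'. is_zero_obj C Z' \<and> (\<exists>a'\<in>hom C X Z'. \<exists>b'\<in>hom C Z' Y. b \<cdot> a = b' \<cdot> a'))"
    using assms(1,2,3) by blast
next
  fix f assume "f \<in> hom C X Y \<and> (\<exists>Z. is_zero_obj C Z \<and> (\<exists>a\<in>hom C X Z. \<exists>b\<in>hom C Z Y. f = b \<cdot> a))"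
  then obtain Z' a' b' where "is_zero_obj C Z'" "a' \<in> hom C X Z'" "b' \<in> hom C Z' Y" "f = b' \<cdot> a'" by blast
  then have "b \<cdot> a = b' \<cdot> a'" using zero_factorisation_unique[OF assms] by blast
  then show "f = b \<cdot> a" using \<open>f = b' \<cdot> a'\<close> by simp
qed

lemma zero_object_between:
  assumes "X \<in> Ob C" "Y \<in> Ob C"
  obtains Z a b where "is_zero_obj C Z" "a \<in> hom C X Z" "b \<in> hom C Z Y"
proof -
  obtain Z where Z: "is_zero_obj C Z" using zero_object_exists by blast
  then obtain a b where "a \<in> hom C X Z" "b \<in> hom C Z Y"
    using assms unfolding is_zero_obj_def is_initial_def is_terminal_def by blast
  then show ?thesis using that Z by blast
qed

lemma zero_mor_in_Ar [simp]: "X \<in> Ob C \<Longrightarrow> Y \<in> Ob C \<Longrightarrow> zero_mor C X Y \<in> Ar C"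
  and Dom_zero_mor [simp]: "X \<in> Ob C \<Longrightarrow> Y \<in> Ob C \<Longrightarrow> Dom C (zero_mor C X Y) = X"
  and Cod_zero_mor [simp]: "X \<in> Ob C \<Longrightarrow> Y \<in> Ob C \<Longrightarrow> Cod C (zero_mor C X Y) = Y"
proof -
  assume "X \<in> Ob C" "Y \<in> Ob C"
  then obtain Z a b where "is_zero_obj C Z" "a \<in> hom C X Z" "b \<in> hom C Z Y" by (rule zero_object_between)
  then have "zero_mor C X Y = b \<cdot> a" "b \<cdot> a \<in> hom C X Y" using zero_mor_eq_comp by auto
  then show "zero_mor C X Y \<in> Ar C" "Dom C (zero_mor C X Y) = X" "Cod C (zero_mor C X Y) = Y" by auto
qed

lemma zero_mor_comp [simp]: "f \<in> Ar C \<Longrightarrow> Cod C f = X \<Longrightarrow> Y \<in> Ob C \<Longrightarrow> zero_mor C X Y \<cdot> f = zero_mor C (Dom C f) Y"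
proof -
  assume f: "f \<in> Ar C" "Cod C f = X" "Y \<in> Ob C"
  then have X: "X \<in> Ob C" by auto
  obtain Z a b where "is_zero_obj C Z" "a \<in> hom C X Z" "b \<in> hom C Z Y" using zero_object_between[OF X f(3)] .
  moreover have "a \<cdot> f \<in> hom C (Dom C f) Z" using calculation f by auto
  ultimately have e: "zero_mor C (Dom C f) Y = b \<cdot> a \<cdot> f" "zero_mor C X Y = b \<cdot> a" using zero_mor_eq_comp by blast+
  have as: "(b \<cdot> a) \<cdot> f = b \<cdot> a \<cdot> f" using f \<open>a \<in> hom C X Z\<close> \<open>b \<in> hom C Z Y\<close> by (intro comp_assoc) auto
  have "zero_mor C X Y \<cdot> f = (b \<cdot> a) \<cdot> f" using e(2) by (rule arg_cong)
  also have "\<dots> = zero_mor C (Dom C f) Y" using as e(1) by (rule trans[OF _ sym])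
  finally show ?thesis .
qed

lemma comp_zero_mor [simp]: "g \<in> Ar C \<Longrightarrow> Dom C g = Y \<Longrightarrow> X \<in> Ob C \<Longrightarrow> g \<cdot> zero_mor C X Y = zero_mor C X (Cod C g)"
proof -
  assume g: "g \<in> Ar C" "Dom C g = Y" "X \<in> Ob C"
  then have Y: "Y \<in> Ob C" by auto
  obtain Z a b where "is_zero_obj C Z" "a \<in> hom C X Z" "b \<in> hom C Z Y" using zero_object_between[OF g(3) Y] .
  moreover have "g \<cdot> b \<in> hom C Z (Cod C g)" using calculation g by auto
  ultimately have e: "zero_mor C X (Cod C g) = (g \<cdot> b) \<cdot> a" "zero_mor C X Y = b \<cdot> a" using zero_mor_eq_comp by blast+
  have as: "(g \<cdot> b) \<cdot> a = g \<cdot> b \<cdot> a" using g \<open>a \<in> hom C X Z\<close> \<open>b \<in> hom C Z Y\<close> by (intro comp_assoc) auto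
  have "g \<cdot> zero_mor C X Y = g \<cdot> b \<cdot> a" using e(2) by (rule arg_cong)
  also have "\<dots> = zero_mor C X (Cod C g)" using as e(1) by simp
  finally show ?thesis .
qed

lemma comp_rewrite: "a \<cdot> b = c \<Longrightarrow> a \<in> Ar C \<Longrightarrow> b \<in> Ar C \<Longrightarrow> Cod C b = Dom C a \<Longrightarrow> x \<in> Ar C \<Longrightarrow>
   Cod C x = Dom C b \<Longrightarrow> a \<cdot> b \<cdot> x = c \<cdot> x"
  by (metis comp_assoc)

lemma hom_Ob: "f \<in> hom C X Y \<Longrightarrow> X \<in> Ob C \<and> Y \<in> Ob C"
  using Dom_in_Ob Cod_in_Ob by auto

lemma terminal_exists: "\<exists>T. is_terminal C T"
  using protomodular unfolding protomodular_def has_finite_limits_def by blast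

lemma pullback_exists: "f \<in> Ar C \<Longrightarrow> g \<in> Ar C \<Longrightarrow> Cod C f = Cod C g \<Longrightarrow> \<exists>p q. is_pullback C f g p q"
  using protomodular unfolding protomodular_def has_finite_limits_def by blast

lemma pullbackD:
  assumes "is_pullback C f g p q"
  shows "f \<in> Ar C" "g \<in> Ar C" "p \<in> Ar C" "q \<in> Ar C" "Cod C f = Cod C g" "Dom C q = Dom C p"
    "Cod C p = Dom C f" "Cod C q = Dom C g" "f \<cdot> p = g \<cdot> q"
  using assms unfolding is_pullback_def by auto

lemma pullback_factor:
  assumes "is_pullback C f g p q" "a \<in> Ar C" "b \<in> Ar C" "Dom C b = Dom C a"
    "Cod C a = Dom C f" "Cod C b = Dom C g" "f \<cdot> a = g \<cdot> b"
  obtains h where "h \<in> Ar C" "Dom C h = Dom C a" "Cod C h = Dom C p" "p \<cdot> h = a" "q \<cdot> h = b"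
proof -
  have "\<forall>W \<in> Ob C. \<forall>a \<in> hom C W (Dom C f). \<forall>b \<in> hom C W (Dom C g).
        f \<cdot> a = g \<cdot> b \<longrightarrow> (\<exists>!h. h \<in> hom C W (Dom C p) \<and> p \<cdot> h = a \<and> q \<cdot> h = b)"
    using assms(1) unfolding is_pullback_def by blast
  moreover have "Dom C a \<in> Ob C" "a \<in> hom C (Dom C a) (Dom C f)" "b \<in> hom C (Dom C a) (Dom C g)"
    using assms by simp_all
  ultimately have "\<exists>!h. h \<in> hom C (Dom C a) (Dom C p) \<and> p \<cdot> h = a \<and> q \<cdot> h = b" using assms(7) by blast
  then show ?thesis using that by auto
qed

lemma pullback_arrow_eqI:
  assumes "is_pullback C f g p q" "h \<in> Ar C" "h' \<in> Ar C" "Dom C h' = Dom C h"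
    "Cod C h = Dom C p" "Cod C h' = Dom C p" "p \<cdot> h = p \<cdot> h'" "q \<cdot> h = q \<cdot> h'"
  shows "h = h'"
proof -
  note P = pullbackD[OF assms(1)]
  have "\<forall>W \<in> Ob C. \<forall>a \<in> hom C W (Dom C f). \<forall>b \<in> hom C W (Dom C g).
        f \<cdot> a = g \<cdot> b \<longrightarrow> (\<exists>!h. h \<in> hom C W (Dom C p) \<and> p \<cdot> h = a \<and> q \<cdot> h = b)"
    using assms(1) unfolding is_pullback_def by blast
  moreover have "Dom C h \<in> Ob C" "p \<cdot> h \<in> hom C (Dom C h) (Dom C f)" "q \<cdot> h \<in> hom C (Dom C h) (Dom C g)"
    using assms P by simp_all
  moreover have "f \<cdot> (p \<cdot> h) = g \<cdot> (q \<cdot> h)" using assms P by (simp flip: comp_assoc)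
  ultimately have "\<exists>!k. k \<in> hom C (Dom C h) (Dom C p) \<and> p \<cdot> k = p \<cdot> h \<and> q \<cdot> k = q \<cdot> h" by blast
  moreover have "h \<in> hom C (Dom C h) (Dom C p)" "h' \<in> hom C (Dom C h) (Dom C p)" using assms by simp_all
  ultimately show ?thesis using assms(7,8) by metis
qed

lemma mono_cancel:
  assumes "is_mono C m" "a \<in> Ar C" "b \<in> Ar C" "Cod C a = Dom C m" "Cod C b = Dom C m"
   "Dom C b = Dom C a" "m \<cdot> a = m \<cdot> b"
  shows "a = b"
proof -
  have "\<forall>W \<in> Ob C. \<forall>a \<in> hom C W (Dom C m). \<forall>b \<in> hom C W (Dom C m). m \<cdot> a = m \<cdot> b \<longrightarrow> a = b"
    using assms(1) unfolding is_mono_def by blast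
  moreover have "Dom C a \<in> Ob C" "a \<in> hom C (Dom C a) (Dom C m)" "b \<in> hom C (Dom C a) (Dom C m)"
    using assms by simp_all
  ultimately show ?thesis using assms(7) by blast
qed

lemma mono_in_Ar: "is_mono C m \<Longrightarrow> m \<in> Ar C"
  unfolding is_mono_def by blast

lemma is_monoI:
  assumes "m \<in> Ar C"
  "\<And>a b. a \<in> Ar C \<Longrightarrow> b \<in> Ar C \<Longrightarrow> Cod C a = Dom C m \<Longrightarrow> Cod C b = Dom C m \<Longrightarrow>
     Dom C b = Dom C a \<Longrightarrow> m \<cdot> a = m \<cdot> b \<Longrightarrow> a = b"
  shows "is_mono C m"
  unfolding is_mono_def using assms by simp

lemma product_exists:
  assumes "X \<in> Ob C" "Y \<in> Ob C"
  shows "\<exists>P p1 p2. is_product C X Y P p1 p2"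
proof -
  obtain T where T: "is_terminal C T" using terminal_exists by blast
  then have TO: "T \<in> Ob C" unfolding is_terminal_def by blast
  obtain tx where tx: "tx \<in> hom C X T" using T assms unfolding is_terminal_def by blast
  obtain ty where ty: "ty \<in> hom C Y T" using T assms unfolding is_terminal_def by blast
  obtain p q where pb: "is_pullback C tx ty p q" using pullback_exists[of tx ty] tx ty by auto
  note P = pullbackD[OF pb]
  have "is_product C X Y (Dom C p) p q"
    unfolding is_product_def
  proof (intro conjI ballI)
    fix W a b assume W: "W \<in> Ob C" and a: "a \<in> hom C W X" and b: "b \<in> hom C W Y"
    have "tx \<cdot> a \<in> hom C W T" "ty \<cdot> b \<in> hom C W T" using a b tx ty by simp_all
    then have e: "tx \<cdot> a = ty \<cdot> b" using T terminal_arrow_unique by blast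
    obtain h where h: "h \<in> Ar C" "Dom C h = Dom C a" "Cod C h = Dom C p" "p \<cdot> h = a" "q \<cdot> h = b"
      using pullback_factor[OF pb, of a b] a b tx ty e by auto
    show "\<exists>!h. h \<in> hom C W (Dom C p) \<and> p \<cdot> h = a \<and> q \<cdot> h = b"
    proof (rule ex1I[of _ h])
      show "h \<in> hom C W (Dom C p) \<and> p \<cdot> h = a \<and> q \<cdot> h = b" using h a by simp
    next
      fix h' assume "h' \<in> hom C W (Dom C p) \<and> p \<cdot> h' = a \<and> q \<cdot> h' = b"
      then show "h' = h" using pullback_arrow_eqI[OF pb, of h' h] h a by simp
    qed
  qed (use assms P tx ty in simp_all)
  then show ?thesis by blast
qed

lemma has_split_short_five: "split_short_five C"
  using protomodular unfolding protomodular_def by blast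

lemma is_pullbackI:
  assumes "f \<in> Ar C" "g \<in> Ar C" "p \<in> Ar C" "q \<in> Ar C" "Cod C f = Cod C g" "Dom C q = Dom C p"
    "Cod C p = Dom C f" "Cod C q = Dom C g" "f \<cdot> p = g \<cdot> q"
    and ex: "\<And>a b. a \<in> Ar C \<Longrightarrow> b \<in> Ar C \<Longrightarrow> Dom C b = Dom C a \<Longrightarrow> Cod C a = Dom C f \<Longrightarrow>
       Cod C b = Dom C g \<Longrightarrow> f \<cdot> a = g \<cdot> b \<Longrightarrow>
       \<exists>h. h \<in> Ar C \<and> Dom C h = Dom C a \<and> Cod C h = Dom C p \<and> p \<cdot> h = a \<and> q \<cdot> h = b"
    and un: "\<And>h h'. h \<in> Ar C \<Longrightarrow> h' \<in> Ar C \<Longrightarrow> Dom C h' = Dom C h \<Longrightarrow> Cod C h = Dom C p \<Longrightarrow>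
       Cod C h' = Dom C p \<Longrightarrow> p \<cdot> h = p \<cdot> h' \<Longrightarrow> q \<cdot> h = q \<cdot> h' \<Longrightarrow> h = h'"
  shows "is_pullback C f g p q"
  unfolding is_pullback_def
proof (intro conjI ballI impI)
  fix W a b assume W: "W \<in> Ob C" and a: "a \<in> hom C W (Dom C f)" and b: "b \<in> hom C W (Dom C g)"
    and e: "f \<cdot> a = g \<cdot> b"
  obtain h where h: "h \<in> Ar C" "Dom C h = Dom C a" "Cod C h = Dom C p" "p \<cdot> h = a" "q \<cdot> h = b"
    using ex[of a b] a b e by auto
  show "\<exists>!h. h \<in> hom C W (Dom C p) \<and> p \<cdot> h = a \<and> q \<cdot> h = b"
  proof (rule ex1I[of _ h])
    show "h \<in> hom C W (Dom C p) \<and> p \<cdot> h = a \<and> q \<cdot> h = b" using h a by simp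
  next
    fix h' assume "h' \<in> hom C W (Dom C p) \<and> p \<cdot> h' = a \<and> q \<cdot> h' = b"
    then show "h' = h" using un[of h' h] h a by simp
  qed
qed (use assms in simp_all)

lemma kernelD: "is_kernel C k p \<Longrightarrow> k \<in> Ar C \<and> p \<in> Ar C \<and> Cod C k = Dom C p \<and> p \<cdot> k = zero_mor C (Dom C k) (Cod C p)"
  unfolding is_kernel_def by blast

lemma kernel_factor:
  assumes "is_kernel C k p" "g \<in> Ar C" "Cod C g = Dom C p" "p \<cdot> g = zero_mor C (Dom C g) (Cod C p)"
  shows "\<exists>h. h \<in> Ar C \<and> Dom C h = Dom C g \<and> Cod C h = Dom C k \<and> k \<cdot> h = g"
proof -
  have "\<forall>W \<in> Ob C. \<forall>g \<in> hom C W (Dom C p). p \<cdot> g = zero_mor C W (Cod C p) \<longrightarrow>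
        (\<exists>!h. h \<in> hom C W (Dom C k) \<and> k \<cdot> h = g)" using assms(1) unfolding is_kernel_def by blast
  moreover have "Dom C g \<in> Ob C" "g \<in> hom C (Dom C g) (Dom C p)" using assms by simp_all
  ultimately have "\<exists>!h. h \<in> hom C (Dom C g) (Dom C k) \<and> k \<cdot> h = g" using assms(4) by blast
  then show ?thesis by auto
qed

lemma kernel_is_mono:
  assumes "is_kernel C k p"
  shows "is_mono C k"
proof (rule is_monoI)
  show "k \<in> Ar C" using kernelD[OF assms] by blast
next
  fix a b assume ab: "a \<in> Ar C" "b \<in> Ar C" "Cod C a = Dom C k" "Cod C b = Dom C k" "Dom C b = Dom C a" "k \<cdot> a = k \<cdot> b"
  have K: "k \<in> Ar C" "p \<in> Ar C" "Cod C k = Dom C p" "p \<cdot> k = zero_mor C (Dom C k) (Cod C p)" using kernelD[OF assms] by blast+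
  have "\<forall>W \<in> Ob C. \<forall>g \<in> hom C W (Dom C p). p \<cdot> g = zero_mor C W (Cod C p) \<longrightarrow>
        (\<exists>!h. h \<in> hom C W (Dom C k) \<and> k \<cdot> h = g)" using assms(1) unfolding is_kernel_def by blast
  moreover have "Dom C a \<in> Ob C" "k \<cdot> a \<in> hom C (Dom C a) (Dom C p)" using ab K by simp_all
  moreover have "p \<cdot> (k \<cdot> a) = zero_mor C (Dom C a) (Cod C p)" using ab K by (simp add: comp_rewrite[OF K(4)])
  ultimately have "\<exists>!h. h \<in> hom C (Dom C a) (Dom C k) \<and> k \<cdot> h = k \<cdot> a" by blast
  moreover have "a \<in> hom C (Dom C a) (Dom C k) \<and> k \<cdot> a = k \<cdot> a" "b \<in> hom C (Dom C a) (Dom C k) \<and> k \<cdot> b = k \<cdot> a"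
    using ab by simp_all
  ultimately show "a = b" by blast
qed

lemma arrow_to_zero_object: "is_zero_obj C Z \<Longrightarrow> f \<in> Ar C \<Longrightarrow> Cod C f = Z \<Longrightarrow> f = zero_mor C (Dom C f) Z"
proof -
  assume a: "is_zero_obj C Z" "f \<in> Ar C" "Cod C f = Z"
  then have "Z \<in> Ob C" "Dom C f \<in> Ob C" unfolding is_zero_obj_def is_initial_def by auto
  then show ?thesis using terminal_arrow_unique[of Z f "Dom C f" "zero_mor C (Dom C f) Z"] a unfolding is_zero_obj_def by simp
qed

lemma pullback_mono:
  assumes pb: "is_pullback C f g p q" and mg: "is_mono C g"
  shows "is_mono C p"
proof (rule is_monoI)
  note P = pullbackD[OF pb]
  show "p \<in> Ar C" using P by simp
  fix a b assume ab: "a \<in> Ar C" "b \<in> Ar C" "Cod C a = Dom C p" "Cod C b = Dom C p" "Dom C b = Dom C a" "p \<cdot> a = p \<cdot> b"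
  have "g \<cdot> q \<cdot> a = g \<cdot> q \<cdot> b"
  proof -
    have "g \<cdot> q \<cdot> a = f \<cdot> p \<cdot> a" using ab(1-5) P(1-8) by (simp add: comp_rewrite[OF P(9)[symmetric]])
    also have "\<dots> = f \<cdot> p \<cdot> b" using ab by simp
    also have "\<dots> = g \<cdot> q \<cdot> b" using ab(1-5) P(1-8) by (simp add: comp_rewrite[OF P(9)[symmetric]])
    finally show ?thesis .
  qed
  then have "q \<cdot> a = q \<cdot> b" using mono_cancel[OF mg, of "q \<cdot> a" "q \<cdot> b"] ab P by simp
  then show "a = b" using pullback_arrow_eqI[OF pb, of a b] ab by simp
qed

lemma mono_comp:
  assumes "is_mono C m" "is_mono C a" "Cod C a = Dom C m"
  shows "is_mono C (m \<cdot> a)"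
proof (rule is_monoI)
  have A: "m \<in> Ar C" "a \<in> Ar C" using assms mono_in_Ar by blast+
  then show "m \<cdot> a \<in> Ar C" using assms by simp
  fix x y assume xy: "x \<in> Ar C" "y \<in> Ar C" "Cod C x = Dom C (m \<cdot> a)" "Cod C y = Dom C (m \<cdot> a)"
    "Dom C y = Dom C x" "(m \<cdot> a) \<cdot> x = (m \<cdot> a) \<cdot> y"
  have xy': "Cod C x = Dom C a" "Cod C y = Dom C a" using xy A assms by simp_all
  have "m \<cdot> (a \<cdot> x) = m \<cdot> (a \<cdot> y)" using xy xy' A assms by simp
  then have "a \<cdot> x = a \<cdot> y" using mono_cancel[OF assms(1), of "a \<cdot> x" "a \<cdot> y"] xy xy' A assms by simp
  then show "x = y" using mono_cancel[OF assms(2), of x y] xy xy' by simp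
qed

end

section \<open>Binary products\<close>

definition tuple :: "('o, 'm) cat \<Rightarrow> 'm \<Rightarrow> 'm \<Rightarrow> 'm \<Rightarrow> 'm \<Rightarrow> 'm" where
  "tuple C p1 p2 a b = (THE h. h \<in> hom C (Dom C a) (Dom C p1) \<and> Cmp C p1 h = a \<and> Cmp C p2 h = b)"

locale binary_product = protomodular_category +
  fixes X Y P p1 p2
  assumes product: "is_product C X Y P p1 p2"
begin

lemma product_Ob [simp]: "X \<in> Ob C" "Y \<in> Ob C" "P \<in> Ob C"
  using product unfolding is_product_def by auto

lemma projections [simp]: "p1 \<in> Ar C" "Dom C p1 = P" "Cod C p1 = X" "p2 \<in> Ar C" "Dom C p2 = P" "Cod C p2 = Y"
  using product unfolding is_product_def by auto

lemma product_universal: "a \<in> hom C W X \<Longrightarrow> b \<in> hom C W Y \<Longrightarrow> \<exists>!h. h \<in> hom C W P \<and> p1 \<cdot> h = a \<and> p2 \<cdot> h = b"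
  using product hom_Ob unfolding is_product_def by blast

abbreviation tup where "tup a b \<equiv> tuple C p1 p2 a b"

lemma tuple_props:
  assumes "a \<in> Ar C" "b \<in> Ar C" "Cod C a = X" "Cod C b = Y" "Dom C b = Dom C a"
  shows "tup a b \<in> Ar C \<and> Dom C (tup a b) = Dom C a \<and> Cod C (tup a b) = P \<and> p1 \<cdot> tup a b = a \<and> p2 \<cdot> tup a b = b"
proof -
  have ex: "\<exists>!h. h \<in> hom C (Dom C a) P \<and> p1 \<cdot> h = a \<and> p2 \<cdot> h = b" using product_universal assms by simp
  have "tup a b \<in> hom C (Dom C a) P \<and> p1 \<cdot> tup a b = a \<and> p2 \<cdot> tup a b = b"
    unfolding tuple_def projections(2) by (rule theI'[OF ex])
  then show ?thesis by simp
qed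

lemma tuple_in_Ar [simp]: "a \<in> Ar C \<Longrightarrow> b \<in> Ar C \<Longrightarrow> Cod C a = X \<Longrightarrow> Cod C b = Y \<Longrightarrow> Dom C b = Dom C a \<Longrightarrow> tup a b \<in> Ar C"
  and Dom_tuple [simp]: "a \<in> Ar C \<Longrightarrow> b \<in> Ar C \<Longrightarrow> Cod C a = X \<Longrightarrow> Cod C b = Y \<Longrightarrow> Dom C b = Dom C a \<Longrightarrow> Dom C (tup a b) = Dom C a"
  and Cod_tuple [simp]: "a \<in> Ar C \<Longrightarrow> b \<in> Ar C \<Longrightarrow> Cod C a = X \<Longrightarrow> Cod C b = Y \<Longrightarrow> Dom C b = Dom C a \<Longrightarrow> Cod C (tup a b) = P"
  and proj1_tuple [simp]: "a \<in> Ar C \<Longrightarrow> b \<in> Ar C \<Longrightarrow> Cod C a = X \<Longrightarrow> Cod C b = Y \<Longrightarrow> Dom C b = Dom C a \<Longrightarrow> p1 \<cdot> tup a b = a"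
  and proj2_tuple [simp]: "a \<in> Ar C \<Longrightarrow> b \<in> Ar C \<Longrightarrow> Cod C a = X \<Longrightarrow> Cod C b = Y \<Longrightarrow> Dom C b = Dom C a \<Longrightarrow> p2 \<cdot> tup a b = b"
  using tuple_props by blast+

lemma product_arrow_eqI:
  assumes "h \<in> Ar C" "h' \<in> Ar C" "Cod C h = P" "Cod C h' = P" "Dom C h' = Dom C h"
    "p1 \<cdot> h = p1 \<cdot> h'" "p2 \<cdot> h = p2 \<cdot> h'"
  shows "h = h'"
proof -
  have "\<exists>!k. k \<in> hom C (Dom C h) P \<and> p1 \<cdot> k = p1 \<cdot> h \<and> p2 \<cdot> k = p2 \<cdot> h"
    using product_universal[of "p1 \<cdot> h" "Dom C h" "p2 \<cdot> h"] assms by simp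
  moreover have "h \<in> hom C (Dom C h) P \<and> p1 \<cdot> h = p1 \<cdot> h \<and> p2 \<cdot> h = p2 \<cdot> h"
     "h' \<in> hom C (Dom C h) P \<and> p1 \<cdot> h' = p1 \<cdot> h \<and> p2 \<cdot> h' = p2 \<cdot> h" using assms by auto
  ultimately show ?thesis by (metis (no_types, lifting))
qed

lemma tuple_eqI:
  assumes "h \<in> Ar C" "Cod C h = P" "p1 \<cdot> h = a" "p2 \<cdot> h = b"
  shows "tup a b = h"
proof -
  have q: "tup a b \<in> Ar C \<and> Dom C (tup a b) = Dom C a \<and> Cod C (tup a b) = P \<and> p1 \<cdot> tup a b = a \<and> p2 \<cdot> tup a b = b"
  proof (rule tuple_props)
    show "a \<in> Ar C" "Cod C a = X" using assms(1,2) unfolding assms(3)[symmetric] by simp_all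
    show "b \<in> Ar C" "Cod C b = Y" using assms(1,2) unfolding assms(4)[symmetric] by simp_all
    show "Dom C b = Dom C a" using assms(1,2) unfolding assms(3,4)[symmetric] by simp
  qed
  have d: "Dom C a = Dom C h" using assms(1,2) unfolding assms(3)[symmetric] by simp
  show ?thesis
  proof (rule product_arrow_eqI)
    show "tup a b \<in> Ar C" "Cod C (tup a b) = P" "Dom C h = Dom C (tup a b)"
       "p1 \<cdot> tup a b = p1 \<cdot> h" "p2 \<cdot> tup a b = p2 \<cdot> h" using q d assms by simp_all
  qed (use assms in simp_all)
qed

lemma tuple_comp [simp]:
  assumes "a \<in> Ar C" "b \<in> Ar C" "Cod C a = X" "Cod C b = Y" "Dom C b = Dom C a" "f \<in> Ar C" "Cod C f = Dom C a"
  shows "tup a b \<cdot> f = tup (a \<cdot> f) (b \<cdot> f)"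
  using assms by (intro tuple_eqI[symmetric]) (auto simp flip: comp_assoc)

definition "inj1 = tup (Idm C X) (zero_mor C X Y)"
definition "inj2 = tup (zero_mor C Y X) (Idm C Y)"

lemma inj1 [simp]: "inj1 \<in> Ar C" "Dom C inj1 = X" "Cod C inj1 = P" "p1 \<cdot> inj1 = Idm C X" "p2 \<cdot> inj1 = zero_mor C X Y"
  unfolding inj1_def by simp_all

lemma inj2 [simp]: "inj2 \<in> Ar C" "Dom C inj2 = Y" "Cod C inj2 = P" "p1 \<cdot> inj2 = zero_mor C Y X" "p2 \<cdot> inj2 = Idm C Y"
  unfolding inj2_def by simp_all

lemma inj1_eqI: "h \<in> Ar C \<Longrightarrow> Cod C h = P \<Longrightarrow> p1 \<cdot> h = Idm C X \<Longrightarrow> p2 \<cdot> h = zero_mor C X Y \<Longrightarrow> h = inj1"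
  unfolding inj1_def using tuple_eqI by simp

lemma inj2_eqI: "h \<in> Ar C \<Longrightarrow> Cod C h = P \<Longrightarrow> p1 \<cdot> h = zero_mor C Y X \<Longrightarrow> p2 \<cdot> h = Idm C Y \<Longrightarrow> h = inj2"
  unfolding inj2_def using tuple_eqI by simp

lemma tuple_zero_right [simp]: "a \<in> Ar C \<Longrightarrow> Cod C a = X \<Longrightarrow> Dom C a = W \<Longrightarrow> tup a (zero_mor C W Y) = inj1 \<cdot> a"
  unfolding inj1_def by (subst tuple_comp) auto

lemma tuple_zero_left [simp]: "b \<in> Ar C \<Longrightarrow> Cod C b = Y \<Longrightarrow> Dom C b = W \<Longrightarrow> tup (zero_mor C W X) b = inj2 \<cdot> b"
  unfolding inj2_def by (subst tuple_comp) auto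

lemma tuple_projections [simp]: "tup p1 p2 = Idm C P"
  using tuple_eqI[of "Idm C P" p1 p2] by simp

lemma inj1_proj1: "k \<in> Ar C \<Longrightarrow> Cod C k = P \<Longrightarrow> p2 \<cdot> k = zero_mor C (Dom C k) Y \<Longrightarrow> inj1 \<cdot> p1 \<cdot> k = k"
proof -
  assume k: "k \<in> Ar C" "Cod C k = P" "p2 \<cdot> k = zero_mor C (Dom C k) Y"
  have "inj1 \<cdot> p1 \<cdot> k = tup (p1 \<cdot> k) (zero_mor C (Dom C k) Y)" using k unfolding inj1_def by (simp flip: comp_assoc)
  also have "\<dots> = k" using k by (intro tuple_eqI) simp_all
  finally show ?thesis .
qed

lemma inj2_proj2: "k \<in> Ar C \<Longrightarrow> Cod C k = P \<Longrightarrow> p1 \<cdot> k = zero_mor C (Dom C k) X \<Longrightarrow> inj2 \<cdot> p2 \<cdot> k = k"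
proof -
  assume k: "k \<in> Ar C" "Cod C k = P" "p1 \<cdot> k = zero_mor C (Dom C k) X"
  have "inj2 \<cdot> p2 \<cdot> k = tup (zero_mor C (Dom C k) X) (p2 \<cdot> k)" using k unfolding inj2_def by (simp flip: comp_assoc)
  also have "\<dots> = k" using k by (intro tuple_eqI) simp_all
  finally show ?thesis .
qed

end

context protomodular_category begin

lemma binary_productI: "is_product C X Y P p1 p2 \<Longrightarrow> binary_product C X Y P p1 p2"
  by (simp add: binary_product_def binary_product_axioms_def protomodular_category_axioms)

lemma obtain_product:
  assumes "X \<in> Ob C" "Y \<in> Ob C"
  obtains P p1 p2 where "binary_product C X Y P p1 p2"
  using product_exists[OF assms] binary_productI by blast

lemma commuteE:
  assumes "commute C f g"
  obtains Q q1 q2 \<phi> where "binary_product C (Dom C f) (Dom C g) Q q1 q2" "\<phi> \<in> hom C Q (Cod C f)"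
    "\<phi> \<cdot> binary_product.inj1 C (Dom C f) (Dom C g) q1 q2 = f"
    "\<phi> \<cdot> binary_product.inj2 C (Dom C f) (Dom C g) q1 q2 = g"
proof -
  obtain Q q1 q2 j1 j2 \<phi> where Q: "is_product C (Dom C f) (Dom C g) Q q1 q2"
    and j1: "j1 \<in> hom C (Dom C f) Q" "q1 \<cdot> j1 = Idm C (Dom C f)" "q2 \<cdot> j1 = zero_mor C (Dom C f) (Dom C g)"
    and j2: "j2 \<in> hom C (Dom C g) Q" "q1 \<cdot> j2 = zero_mor C (Dom C g) (Dom C f)" "q2 \<cdot> j2 = Idm C (Dom C g)"
    and \<phi>: "\<phi> \<in> hom C Q (Cod C f)" "\<phi> \<cdot> j1 = f" "\<phi> \<cdot> j2 = g"
    using assms unfolding commute_def by blast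
  interpret Q: binary_product C "Dom C f" "Dom C g" Q q1 q2 using binary_productI[OF Q] .
  have "j1 = Q.inj1" "j2 = Q.inj2" using Q.inj1_eqI[of j1] Q.inj2_eqI[of j2] j1 j2 by simp_all
  then show thesis using that[of Q q1 q2 \<phi>] Q.binary_product_axioms \<phi> by simp
qed

lemma commuteI:
  assumes Q: "binary_product C (Dom C f) (Dom C g) Q q1 q2" and \<phi>: "\<phi> \<in> hom C Q (Cod C f)"
    "\<phi> \<cdot> binary_product.inj1 C (Dom C f) (Dom C g) q1 q2 = f"
    "\<phi> \<cdot> binary_product.inj2 C (Dom C f) (Dom C g) q1 q2 = g"
    and fg: "f \<in> Ar C" "g \<in> Ar C" "Cod C f = Cod C g"
  shows "commute C f g"
proof -
  interpret Q: binary_product C "Dom C f" "Dom C g" Q q1 q2 by (rule Q)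
  have "Q.inj1 \<in> hom C (Dom C f) Q" "Q.inj2 \<in> hom C (Dom C g) Q" by simp_all
  then show ?thesis
    unfolding commute_def using \<phi> fg Q.product Q.inj1(4,5) Q.inj2(4,5) by blast
qed

end

context binary_product begin

lemma swap: "binary_product C Y X P p2 p1"
  using product by (intro binary_productI) (auto simp: is_product_def conj_commute)

lemma swap_inj1: "binary_product.inj1 C Y X p2 p1 = inj2"
  and swap_inj2: "binary_product.inj2 C Y X p2 p1 = inj1"
proof -
  interpret S: binary_product C Y X P p2 p1 by (rule swap)
  show "S.inj1 = inj2" by (rule inj2_eqI) simp_all
  show "S.inj2 = inj1" by (rule inj1_eqI) simp_all
qed

lemma inj1_kernel: "is_kernel C inj1 p2"
  unfolding is_kernel_def
proof (intro conjI ballI impI)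
  fix W g assume W: "W \<in> Ob C" and g: "g \<in> hom C W (Dom C p2)" and g0: "p2 \<cdot> g = zero_mor C W (Cod C p2)"
  have e: "inj1 \<cdot> p1 \<cdot> g = g"
  proof -
    have "inj1 \<cdot> p1 \<cdot> g = tup (p1 \<cdot> g) (zero_mor C W Y)" using g W unfolding inj1_def by (simp flip: comp_assoc)
    also have "\<dots> = g" using g g0 by (intro tuple_eqI) auto
    finally show ?thesis .
  qed
  show "\<exists>!h. h \<in> hom C W (Dom C inj1) \<and> inj1 \<cdot> h = g"
  proof (rule ex1I[of _ "p1 \<cdot> g"])
    show "p1 \<cdot> g \<in> hom C W (Dom C inj1) \<and> inj1 \<cdot> p1 \<cdot> g = g" using g e by simp
  next
    fix h assume "h \<in> hom C W (Dom C inj1) \<and> inj1 \<cdot> h = g"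
    then have "p1 \<cdot> inj1 \<cdot> h = p1 \<cdot> g" "h \<in> Ar C" "Dom C h = W" "Cod C h = X" by auto
    then show "h = p1 \<cdot> g" by (simp flip: comp_assoc)
  qed
qed simp_all

lemma proj2_split_epi: "is_split_epi C p2"
  unfolding is_split_epi_def by (intro conjI bexI[of _ inj2]) auto

lemma inj1_protosplit: "protosplit_mono C inj1"
  unfolding protosplit_mono_def using proj2_split_epi inj1_kernel by blast

text \<open>The split short five lemma, applied to the comparison of the split extension
  \<open>X \<rightarrow> N \<leftarrow>\<rightarrow> Y\<close> induced on \<open>N\<close> with \<open>X \<rightarrow> X \<times> Y \<leftarrow>\<rightarrow> Y\<close>: the product injections are
  jointly strongly epic.\<close>
lemma mono_through_injections_is_iso:
  assumes n: "is_mono C n" "n \<in> hom C N P"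
    and e: "e1 \<in> hom C X N" "e2 \<in> hom C Y N" "n \<cdot> e1 = inj1" "n \<cdot> e2 = inj2"
  shows "is_iso C n"
proof -
  have nA: "n \<in> Ar C" "Dom C n = N" "Cod C n = P" using n by auto
  have e1: "e1 \<in> Ar C" "Dom C e1 = X" "Cod C e1 = N" and e2: "e2 \<in> Ar C" "Dom C e2 = Y" "Cod C e2 = N"
    using e by auto
  have retraction: "(p1 \<cdot> n) \<cdot> e1 = Idm C X" using e e1 nA by simp
  have ker: "is_kernel C e1 (p2 \<cdot> n)"
    unfolding is_kernel_def
  proof (intro conjI ballI impI)
    show "(p2 \<cdot> n) \<cdot> e1 = zero_mor C (Dom C e1) (Cod C (p2 \<cdot> n))" using e e1 nA by simp
  next
    fix W g assume g: "g \<in> hom C W (Dom C (p2 \<cdot> n))" and g0: "(p2 \<cdot> n) \<cdot> g = zero_mor C W (Cod C (p2 \<cdot> n))"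
    have gA: "g \<in> Ar C" "Dom C g = W" "Cod C g = N" using g nA by auto
    have "p2 \<cdot> (n \<cdot> g) = zero_mor C (Dom C (n \<cdot> g)) Y" using g0 gA nA by simp
    then have "n \<cdot> e1 \<cdot> p1 \<cdot> n \<cdot> g = n \<cdot> g" using inj1_proj1[of "n \<cdot> g"] e gA nA e1 by (simp flip: comp_assoc)
    then have factor: "e1 \<cdot> p1 \<cdot> n \<cdot> g = g" using mono_cancel[OF n(1)] gA nA e1 by simp
    show "\<exists>!h. h \<in> hom C W (Dom C e1) \<and> e1 \<cdot> h = g"
    proof (rule ex1I[of _ "p1 \<cdot> n \<cdot> g"])
      show "p1 \<cdot> n \<cdot> g \<in> hom C W (Dom C e1) \<and> e1 \<cdot> p1 \<cdot> n \<cdot> g = g" using factor gA nA e1 by simp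
    next
      fix h assume h: "h \<in> hom C W (Dom C e1) \<and> e1 \<cdot> h = g"
      then have "p1 \<cdot> n \<cdot> g = ((p1 \<cdot> n) \<cdot> e1) \<cdot> h" using e1 nA by simp
      then show "h = p1 \<cdot> n \<cdot> g" using h e1 unfolding retraction by simp
    qed
  qed (use e1 nA in simp_all)
  show "is_iso C n"
    apply (rule has_split_short_five[unfolded split_short_five_def, rule_format,
          of e1 "p2 \<cdot> n" e2 inj1 p2 inj2 "Idm C X" n "Idm C Y"])
    using ker inj1_kernel e e1 e2 nA unfolding is_iso_def
    by (simp add: bexI[of _ "Idm C X"] bexI[of _ "Idm C Y"])
qed

lemma factor_through_mono:
  assumes m: "is_mono C m" "m \<in> hom C M T" and psi: "\<psi> \<in> hom C P T"
    and f: "f1 \<in> hom C X M" "f2 \<in> hom C Y M" and e: "\<psi> \<cdot> inj1 = m \<cdot> f1" "\<psi> \<cdot> inj2 = m \<cdot> f2"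
  shows "\<exists>g. g \<in> hom C P M \<and> m \<cdot> g = \<psi>"
proof -
  have mA: "m \<in> Ar C" "Dom C m = M" "Cod C m = T" and pA: "\<psi> \<in> Ar C" "Dom C \<psi> = P" "Cod C \<psi> = T"
    using m psi by auto
  obtain n q where pb: "is_pullback C \<psi> m n q" using pullback_exists[of \<psi> m] mA pA by auto
  define N where "N = Dom C n"
  have nA: "n \<in> Ar C" "Dom C n = N" "Cod C n = P" "q \<in> Ar C" "Dom C q = N" "Cod C q = M" "\<psi> \<cdot> n = m \<cdot> q"
    using pullbackD[OF pb] mA pA N_def by auto
  have fA: "f1 \<in> Ar C" "Dom C f1 = X" "Cod C f1 = M" "f2 \<in> Ar C" "Dom C f2 = Y" "Cod C f2 = M"
    using f by auto
  obtain e1 where e1: "e1 \<in> Ar C" "Dom C e1 = X" "Cod C e1 = N" "n \<cdot> e1 = inj1"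
    using pullback_factor[OF pb, of inj1 f1] fA pA mA e nA by auto
  obtain e2 where e2: "e2 \<in> Ar C" "Dom C e2 = Y" "Cod C e2 = N" "n \<cdot> e2 = inj2"
    using pullback_factor[OF pb, of inj2 f2] fA pA mA e nA by auto
  have "is_iso C n"
    by (rule mono_through_injections_is_iso[OF pullback_mono[OF pb m(1)], of N e1 e2])
      (use nA e1 e2 in simp_all)
  then obtain n' where n': "n' \<in> hom C P N" "n \<cdot> n' = Idm C P"
    unfolding is_iso_def using nA by auto
  show ?thesis
  proof (intro exI conjI)
    show "q \<cdot> n' \<in> hom C P M" using n' nA by simp
    have "m \<cdot> q \<cdot> n' = (\<psi> \<cdot> n) \<cdot> n'" using n' nA mA pA by simp
    also have "\<dots> = \<psi>" using n' nA(1-6) pA by simp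
    finally show "m \<cdot> q \<cdot> n' = \<psi>" .
  qed
qed

lemma injections_jointly_epic:
  assumes f: "f \<in> hom C P T" and g: "g \<in> hom C P T" and e: "f \<cdot> inj1 = g \<cdot> inj1" "f \<cdot> inj2 = g \<cdot> inj2"
  shows "f = g"
proof -
  have fA: "f \<in> Ar C" "Dom C f = P" "Cod C f = T" "g \<in> Ar C" "Dom C g = P" "Cod C g = T" using f g by auto
  have "P \<in> Ob C" "T \<in> Ob C" using fA(1-3) Dom_in_Ob Cod_in_Ob by metis+
  then obtain Q q1 q2 where "binary_product C P T Q q1 q2" using obtain_product by blast
  then interpret Q: binary_product C P T Q q1 q2 .
  define m where "m = Q.tup (Idm C P) f"
  define \<psi> where "\<psi> = Q.tup (Idm C P) g"
  have mA: "m \<in> Ar C" "Dom C m = P" "Cod C m = Q" "q1 \<cdot> m = Idm C P" "q2 \<cdot> m = f" unfolding m_def using fA by simp_all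
  have pA: "\<psi> \<in> Ar C" "Dom C \<psi> = P" "Cod C \<psi> = Q" "q1 \<cdot> \<psi> = Idm C P" "q2 \<cdot> \<psi> = g" unfolding \<psi>_def using fA by simp_all
  have mono: "is_mono C m"
  proof (rule is_monoI)
    fix a b assume ab: "a \<in> Ar C" "b \<in> Ar C" "Cod C a = Dom C m" "Cod C b = Dom C m" "Dom C b = Dom C a" "m \<cdot> a = m \<cdot> b"
    then have "q1 \<cdot> m \<cdot> a = q1 \<cdot> m \<cdot> b" by simp
    moreover have "q1 \<cdot> m \<cdot> a = a" "q1 \<cdot> m \<cdot> b = b" using ab(1-5) mA by (simp_all add: comp_rewrite[OF mA(4)])
    ultimately show "a = b" by simp
  qed (rule mA)
  have e1: "\<psi> \<cdot> inj1 = m \<cdot> inj1" unfolding m_def \<psi>_def using fA e by simp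
  have e2: "\<psi> \<cdot> inj2 = m \<cdot> inj2" unfolding m_def \<psi>_def using fA e by simp
  obtain h where h: "h \<in> hom C P P" "m \<cdot> h = \<psi>"
    using factor_through_mono[OF mono, of P Q \<psi> inj1 inj2] mA pA e1 e2 by auto
  have "h = q1 \<cdot> m \<cdot> h" using h(1) mA by (simp add: comp_rewrite[OF mA(4)])
  also have "\<dots> = q1 \<cdot> \<psi>" using h(2) by simp
  also have "\<dots> = Idm C P" using pA by simp
  finally have "\<psi> = m" using h mA by simp
  then show ?thesis using mA pA by metis
qed

lemma strong_complete_proj1_unique:
  assumes "strong_complete C X" "\<theta> \<in> hom C P X" "\<theta> \<cdot> inj1 = Idm C X"
  shows "\<theta> = p1"
proof -
  have "\<forall>m. protosplit_mono C m \<and> Dom C m = X \<longrightarrow> (\<exists>!r. r \<in> hom C (Cod C m) X \<and> r \<cdot> m = Idm C X)"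
    using assms(1) unfolding strong_complete_def by blast
  then have "\<exists>!r. r \<in> hom C (Cod C inj1) X \<and> r \<cdot> inj1 = Idm C X" using inj1_protosplit inj1(2) by blast
  then have "\<exists>!r. r \<in> hom C P X \<and> r \<cdot> inj1 = Idm C X" by (simp only: inj1(3))
  moreover have "p1 \<in> hom C P X \<and> p1 \<cdot> inj1 = Idm C X" by simp
  ultimately show ?thesis using assms(2,3) by blast
qed

lemma strong_complete_proj2_unique:
  assumes "strong_complete C Y" "\<theta> \<in> hom C P Y" "\<theta> \<cdot> inj2 = Idm C Y"
  shows "\<theta> = p2"
proof -
  interpret S: binary_product C Y X P p2 p1 by (rule swap)
  show ?thesis using S.strong_complete_proj1_unique assms swap_inj1 by simp
qed

end

section \<open>Equivalence relations and normal monomorphisms\<close>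

text \<open>\<open>m : S \<rightarrow> Y\<close> is normal to \<open>R\<close>, in generalised elements: \<open>S \<times> S \<subseteq> R\<close>, and \<open>S\<close> is closed
  under \<open>R\<close> (\<open>x \<in> S\<close> and \<open>x R y\<close> imply \<open>y \<in> S\<close>).\<close>
definition normal_to :: "('o, 'm) cat \<Rightarrow> 'm \<Rightarrow> 'o \<Rightarrow> 'm \<Rightarrow> 'm \<Rightarrow> bool" where
  "normal_to C m R r1 r2 \<longleftrightarrow> is_mono C m \<and> is_equiv_rel C (Cod C m) R r1 r2 \<and>
     (\<forall>x y. x \<in> Ar C \<and> y \<in> Ar C \<and> Cod C x = Dom C m \<and> Cod C y = Dom C m \<and> Dom C y = Dom C x \<longrightarrow>
        (\<exists>u \<in> hom C (Dom C x) R. Cmp C r1 u = Cmp C m x \<and> Cmp C r2 u = Cmp C m y)) \<and>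
     (\<forall>u v. u \<in> Ar C \<and> v \<in> Ar C \<and> Cod C u = R \<and> Cod C v = Dom C m \<and> Dom C v = Dom C u \<and>
        Cmp C r1 u = Cmp C m v \<longrightarrow> (\<exists>s \<in> hom C (Dom C u) (Dom C m). Cmp C m s = Cmp C r2 u))"

context protomodular_category begin

lemma equiv_relD:
  assumes "is_equiv_rel C Y R r1 r2"
  shows "r1 \<in> Ar C" "Dom C r1 = R" "Cod C r1 = Y" "r2 \<in> Ar C" "Dom C r2 = R" "Cod C r2 = Y"
  using assms unfolding is_equiv_rel_def by auto

lemma equiv_rel_jointly_mono:
  assumes "is_equiv_rel C Y R r1 r2" "a \<in> Ar C" "b \<in> Ar C" "Cod C a = R" "Cod C b = R"
   "Dom C b = Dom C a" "r1 \<cdot> a = r1 \<cdot> b" "r2 \<cdot> a = r2 \<cdot> b"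
  shows "a = b"
proof -
  have "\<forall>W \<in> Ob C. \<forall>a \<in> hom C W R. \<forall>b \<in> hom C W R.
        r1 \<cdot> a = r1 \<cdot> b \<and> r2 \<cdot> a = r2 \<cdot> b \<longrightarrow> a = b" using assms(1) unfolding is_equiv_rel_def by blast
  moreover have "Dom C a \<in> Ob C" "a \<in> hom C (Dom C a) R" "b \<in> hom C (Dom C a) R" using assms by simp_all
  ultimately show ?thesis using assms(7,8) by blast
qed

lemma equiv_rel_refl:
  assumes "is_equiv_rel C Y R r1 r2"
  obtains d where "d \<in> Ar C" "Dom C d = Y" "Cod C d = R" "r1 \<cdot> d = Idm C Y" "r2 \<cdot> d = Idm C Y"
  using assms unfolding is_equiv_rel_def by auto

lemma equiv_rel_sym:
  assumes "is_equiv_rel C Y R r1 r2"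
  obtains s where "s \<in> Ar C" "Dom C s = R" "Cod C s = R" "r1 \<cdot> s = r2" "r2 \<cdot> s = r1"
  using assms unfolding is_equiv_rel_def by auto

lemma equiv_rel_trans:
  assumes "is_equiv_rel C Y R r1 r2" "is_pullback C r2 r1 q1 q2"
  obtains t where "t \<in> Ar C" "Dom C t = Dom C q1" "Cod C t = R" "r1 \<cdot> t = r1 \<cdot> q1" "r2 \<cdot> t = r2 \<cdot> q2"
proof -
  have "\<forall>q1 q2. is_pullback C r2 r1 q1 q2 \<longrightarrow>
        (\<exists>\<tau> \<in> hom C (Dom C q1) R. r1 \<cdot> \<tau> = r1 \<cdot> q1 \<and> r2 \<cdot> \<tau> = r2 \<cdot> q2)"
    using assms(1) unfolding is_equiv_rel_def by blast
  then obtain t where "t \<in> hom C (Dom C q1) R" "r1 \<cdot> t = r1 \<cdot> q1" "r2 \<cdot> t = r2 \<cdot> q2" using assms(2) by blast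
  then show thesis using that[of t] by (simp del: in_hom_iff add: hom_def)
qed

lemma equiv_rel_trans_span:
  assumes er: "is_equiv_rel C Y R r1 r2" and u: "u \<in> Ar C" "Cod C u = R"
    and v: "v \<in> Ar C" "Cod C v = R" "Dom C v = Dom C u" and uv: "r2 \<cdot> u = r1 \<cdot> v"
  obtains \<tau> where "\<tau> \<in> Ar C" "Dom C \<tau> = Dom C u" "Cod C \<tau> = R" "r1 \<cdot> \<tau> = r1 \<cdot> u" "r2 \<cdot> \<tau> = r2 \<cdot> v"
proof -
  note rA = equiv_relD[OF er]
  obtain q1 q2 where qpb: "is_pullback C r2 r1 q1 q2" using pullback_exists[of r2 r1] rA by auto
  note QP = pullbackD[OF qpb]
  obtain c where c: "c \<in> Ar C" "Dom C c = Dom C u" "Cod C c = Dom C q1" "q1 \<cdot> c = u" "q2 \<cdot> c = v"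
    using pullback_factor[OF qpb, of u v] u v uv rA by auto
  obtain t where t: "t \<in> Ar C" "Dom C t = Dom C q1" "Cod C t = R" "r1 \<cdot> t = r1 \<cdot> q1" "r2 \<cdot> t = r2 \<cdot> q2"
    by (rule equiv_rel_trans[OF er qpb])
  have "r1 \<cdot> t \<cdot> c = r1 \<cdot> u" "r2 \<cdot> t \<cdot> c = r2 \<cdot> v"
    using t c QP rA by (simp_all add: comp_rewrite[OF t(4)] comp_rewrite[OF t(5)])
  then show thesis using that[of "t \<cdot> c"] t c by simp
qed

lemma kernel_exists:
  assumes \<alpha>: "\<alpha> \<in> Ar C"
  obtains \<kappa> where "is_kernel C \<kappa> \<alpha>"
proof -
  define Y A where "Y = Dom C \<alpha>" and "A = Cod C \<alpha>"
  have aA: "Dom C \<alpha> = Y" "Cod C \<alpha> = A" "Y \<in> Ob C" "A \<in> Ob C" using \<alpha> Y_def A_def by simp_all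
  obtain Z0 where Z0: "is_zero_obj C Z0" using zero_object_exists by blast
  then have Z0O: "Z0 \<in> Ob C" unfolding is_zero_obj_def is_initial_def by blast
  define o0 where "o0 = zero_mor C Z0 A"
  have oA: "o0 \<in> Ar C" "Dom C o0 = Z0" "Cod C o0 = A" using Z0O aA o0_def by simp_all
  obtain \<kappa> t where pb: "is_pullback C \<alpha> o0 \<kappa> t" using pullback_exists[of \<alpha> o0] \<alpha> oA aA by auto
  note PB = pullbackD[OF pb]
  define K where "K = Dom C \<kappa>"
  have kA: "\<kappa> \<in> Ar C" "Dom C \<kappa> = K" "Cod C \<kappa> = Y" "t \<in> Ar C" "Dom C t = K" "Cod C t = Z0"
    using PB K_def aA oA by simp_all
  have ak: "\<alpha> \<cdot> \<kappa> = zero_mor C K A" using PB(9) kA oA aA Z0O unfolding o0_def by simp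
  have ker: "is_kernel C \<kappa> \<alpha>"
    unfolding is_kernel_def
  proof (intro conjI ballI impI)
    fix W g assume W: "W \<in> Ob C" and g: "g \<in> hom C W (Dom C \<alpha>)" and g0: "\<alpha> \<cdot> g = zero_mor C W (Cod C \<alpha>)"
    have gA: "g \<in> Ar C" "Dom C g = W" "Cod C g = Y" using g aA by simp_all
    have e: "\<alpha> \<cdot> g = o0 \<cdot> zero_mor C W Z0" using g0 aA W Z0O oA unfolding o0_def by simp
    obtain h where h: "h \<in> Ar C" "Dom C h = W" "Cod C h = K" "\<kappa> \<cdot> h = g" "t \<cdot> h = zero_mor C W Z0"
      using pullback_factor[OF pb, of g "zero_mor C W Z0"] gA W Z0O oA aA e kA by (simp, blast)
    show "\<exists>!h. h \<in> hom C W (Dom C \<kappa>) \<and> \<kappa> \<cdot> h = g"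
    proof (rule ex1I[of _ h])
      show "h \<in> hom C W (Dom C \<kappa>) \<and> \<kappa> \<cdot> h = g" using h kA by simp
    next
      fix h' assume h': "h' \<in> hom C W (Dom C \<kappa>) \<and> \<kappa> \<cdot> h' = g"
      have "t \<cdot> h' = zero_mor C W Z0" using arrow_to_zero_object[OF Z0, of "t \<cdot> h'"] h' kA by simp
      then show "h' = h" using pullback_arrow_eqI[OF pb, of h' h] h h' kA by simp
    qed
  qed (use kA aA ak \<alpha> in simp_all)
  then show thesis by (rule that)
qed

lemma kernel_pair_equiv_rel:
  assumes epb: "is_pullback C \<alpha> \<alpha> e1 e2"
  shows "is_equiv_rel C (Dom C \<alpha>) (Dom C e1) e1 e2"
proof -
  define Y E where "Y = Dom C \<alpha>" and "E = Dom C e1"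
  have \<alpha>: "\<alpha> \<in> Ar C" and aA: "Dom C \<alpha> = Y" "Y \<in> Ob C" using pullbackD[OF epb] Y_def by simp_all
  note EP = pullbackD[OF epb]
  have eA: "e1 \<in> Ar C" "Dom C e1 = E" "Cod C e1 = Y" "e2 \<in> Ar C" "Dom C e2 = E" "Cod C e2 = Y" "\<alpha> \<cdot> e1 = \<alpha> \<cdot> e2"
    using EP E_def aA by simp_all
  have epair: "\<exists>h. h \<in> Ar C \<and> Dom C h = Dom C u \<and> Cod C h = E \<and> e1 \<cdot> h = u \<and> e2 \<cdot> h = v"
    if "u \<in> Ar C" "v \<in> Ar C" "Dom C v = Dom C u" "Cod C u = Y" "Cod C v = Y" "\<alpha> \<cdot> u = \<alpha> \<cdot> v" for u v
    using pullback_factor[OF epb, of u v] that aA eA by (simp, blast)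
  show ?thesis
    unfolding Y_def[symmetric] E_def[symmetric] is_equiv_rel_def
  proof (intro conjI ballI impI allI)
    show "e1 \<in> hom C E Y" "e2 \<in> hom C E Y" using eA by simp_all
  next
    fix W a b assume "W \<in> Ob C" "a \<in> hom C W E" "b \<in> hom C W E" "e1 \<cdot> a = e1 \<cdot> b \<and> e2 \<cdot> a = e2 \<cdot> b"
    then show "a = b" using pullback_arrow_eqI[OF epb, of a b] eA by simp
  next
    obtain d where d: "d \<in> Ar C" "Dom C d = Y" "Cod C d = E" "e1 \<cdot> d = Idm C Y" "e2 \<cdot> d = Idm C Y"
      using epair[of "Idm C Y" "Idm C Y"] aA by auto
    then show "\<exists>d\<in>hom C Y E. e1 \<cdot> d = Idm C Y \<and> e2 \<cdot> d = Idm C Y" by auto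
  next
    obtain s where s: "s \<in> Ar C" "Dom C s = E" "Cod C s = E" "e1 \<cdot> s = e2" "e2 \<cdot> s = e1"
      using epair[of e2 e1] eA by auto
    then show "\<exists>\<sigma>\<in>hom C E E. e1 \<cdot> \<sigma> = e2 \<and> e2 \<cdot> \<sigma> = e1" by auto
  next
    fix q1 q2 assume qp: "is_pullback C e2 e1 q1 q2"
    note QP = pullbackD[OF qp]
    have qA: "q1 \<in> Ar C" "Cod C q1 = E" "q2 \<in> Ar C" "Cod C q2 = E" "Dom C q2 = Dom C q1" "e2 \<cdot> q1 = e1 \<cdot> q2"
      using QP eA by simp_all
    have "\<alpha> \<cdot> e1 \<cdot> q1 = \<alpha> \<cdot> e2 \<cdot> q2"
    proof -
      have "\<alpha> \<cdot> e1 \<cdot> q1 = \<alpha> \<cdot> e2 \<cdot> q1" using qA(1-5) eA \<alpha> aA by (simp add: comp_rewrite[OF eA(7)])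
      also have "\<dots> = \<alpha> \<cdot> e1 \<cdot> q2" using qA by simp
      also have "\<dots> = \<alpha> \<cdot> e2 \<cdot> q2" using qA(1-5) eA \<alpha> aA by (simp add: comp_rewrite[OF eA(7)])
      finally show ?thesis .
    qed
    then obtain \<tau> where "\<tau> \<in> Ar C" "Dom C \<tau> = Dom C q1" "Cod C \<tau> = E" "e1 \<cdot> \<tau> = e1 \<cdot> q1" "e2 \<cdot> \<tau> = e2 \<cdot> q2"
      using epair[of "e1 \<cdot> q1" "e2 \<cdot> q2"] qA eA by auto
    then show "\<exists>\<tau>\<in>hom C (Dom C q1) E. e1 \<cdot> \<tau> = e1 \<cdot> q1 \<and> e2 \<cdot> \<tau> = e2 \<cdot> q2" by auto
  qed
qed

lemma normal_toD:
  assumes "normal_to C m R r1 r2"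
  shows normal_to_mono: "is_mono C m" and normal_to_equiv_rel: "is_equiv_rel C (Cod C m) R r1 r2"
  using assms unfolding normal_to_def by blast+

lemma normal_to_related:
  assumes "normal_to C m R r1 r2" "x \<in> Ar C" "y \<in> Ar C" "Cod C x = Dom C m" "Cod C y = Dom C m"
    "Dom C y = Dom C x"
  obtains u where "u \<in> Ar C" "Dom C u = Dom C x" "Cod C u = R" "r1 \<cdot> u = m \<cdot> x" "r2 \<cdot> u = m \<cdot> y"
proof -
  have "\<forall>x y. x \<in> Ar C \<and> y \<in> Ar C \<and> Cod C x = Dom C m \<and> Cod C y = Dom C m \<and> Dom C y = Dom C x \<longrightarrow>
      (\<exists>u \<in> hom C (Dom C x) R. r1 \<cdot> u = m \<cdot> x \<and> r2 \<cdot> u = m \<cdot> y)"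
    using assms(1) unfolding normal_to_def by blast
  then obtain u where "u \<in> hom C (Dom C x) R" "r1 \<cdot> u = m \<cdot> x" "r2 \<cdot> u = m \<cdot> y"
    using assms(2-6) by blast
  then show thesis using that[of u] by simp
qed

lemma normal_to_closed:
  assumes "normal_to C m R r1 r2" "u \<in> Ar C" "v \<in> Ar C" "Cod C u = R" "Cod C v = Dom C m"
    "Dom C v = Dom C u" "r1 \<cdot> u = m \<cdot> v"
  obtains s where "s \<in> Ar C" "Dom C s = Dom C u" "Cod C s = Dom C m" "m \<cdot> s = r2 \<cdot> u"
proof -
  have "\<forall>u v. u \<in> Ar C \<and> v \<in> Ar C \<and> Cod C u = R \<and> Cod C v = Dom C m \<and> Dom C v = Dom C u \<and>
      r1 \<cdot> u = m \<cdot> v \<longrightarrow> (\<exists>s \<in> hom C (Dom C u) (Dom C m). m \<cdot> s = r2 \<cdot> u)"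
    using assms(1) unfolding normal_to_def by blast
  then obtain s where "s \<in> hom C (Dom C u) (Dom C m)" "m \<cdot> s = r2 \<cdot> u"
    using assms(2-7) by blast
  then show thesis using that[of s] by simp
qed

lemma normal_toI:
  assumes "is_mono C m" "is_equiv_rel C (Cod C m) R r1 r2"
    and related: "\<And>x y. x \<in> Ar C \<Longrightarrow> y \<in> Ar C \<Longrightarrow> Cod C x = Dom C m \<Longrightarrow> Cod C y = Dom C m \<Longrightarrow>
      Dom C y = Dom C x \<Longrightarrow> \<exists>u. u \<in> Ar C \<and> Dom C u = Dom C x \<and> Cod C u = R \<and> r1 \<cdot> u = m \<cdot> x \<and> r2 \<cdot> u = m \<cdot> y"
    and closed: "\<And>u v. u \<in> Ar C \<Longrightarrow> v \<in> Ar C \<Longrightarrow> Cod C u = R \<Longrightarrow> Cod C v = Dom C m \<Longrightarrow>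
      Dom C v = Dom C u \<Longrightarrow> r1 \<cdot> u = m \<cdot> v \<Longrightarrow>
      \<exists>s. s \<in> Ar C \<and> Dom C s = Dom C u \<and> Cod C s = Dom C m \<and> m \<cdot> s = r2 \<cdot> u"
  shows "normal_to C m R r1 r2"
  unfolding normal_to_def
proof (intro conjI allI impI)
  fix x y assume "x \<in> Ar C \<and> y \<in> Ar C \<and> Cod C x = Dom C m \<and> Cod C y = Dom C m \<and> Dom C y = Dom C x"
  then obtain u where "u \<in> Ar C" "Dom C u = Dom C x" "Cod C u = R" "r1 \<cdot> u = m \<cdot> x" "r2 \<cdot> u = m \<cdot> y"
    using related by blast
  then show "\<exists>u \<in> hom C (Dom C x) R. r1 \<cdot> u = m \<cdot> x \<and> r2 \<cdot> u = m \<cdot> y" by auto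
next
  fix u v assume "u \<in> Ar C \<and> v \<in> Ar C \<and> Cod C u = R \<and> Cod C v = Dom C m \<and> Dom C v = Dom C u \<and>
    r1 \<cdot> u = m \<cdot> v"
  then obtain s where "s \<in> Ar C" "Dom C s = Dom C u" "Cod C s = Dom C m" "m \<cdot> s = r2 \<cdot> u"
    using closed by blast
  then show "\<exists>s \<in> hom C (Dom C u) (Dom C m). m \<cdot> s = r2 \<cdot> u" by auto
qed (use assms(1,2) in simp_all)

lemma bourn_normal_imp_normal_to:
  assumes "bourn_normal C m"
  obtains R r1 r2 where "normal_to C m R r1 r2"
proof -
  obtain R r1 r2 PP \<pi>1 \<pi>2 mt where mono: "is_mono C m" and er: "is_equiv_rel C (Cod C m) R r1 r2"
    and pp: "is_product C (Dom C m) (Dom C m) PP \<pi>1 \<pi>2" and mt: "mt \<in> hom C PP R"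
    "r1 \<cdot> mt = m \<cdot> \<pi>1" "r2 \<cdot> mt = m \<cdot> \<pi>2" and pb: "is_pullback C r1 m mt \<pi>1"
    using assms unfolding bourn_normal_def by blast
  interpret PP: binary_product C "Dom C m" "Dom C m" PP \<pi>1 \<pi>2 using binary_productI[OF pp] .
  have mA: "m \<in> Ar C" using mono_in_Ar[OF mono] .
  have rA: "r1 \<in> Ar C" "Dom C r1 = R" "r2 \<in> Ar C" "Dom C r2 = R" using equiv_relD[OF er] by simp_all
  have mt': "mt \<in> Ar C" "Dom C mt = PP" "Cod C mt = R" using mt by simp_all
  have "normal_to C m R r1 r2"
  proof (rule normal_toI[OF mono er])
    fix x y assume xy: "x \<in> Ar C" "y \<in> Ar C" "Cod C x = Dom C m" "Cod C y = Dom C m" "Dom C y = Dom C x"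
    show "\<exists>u. u \<in> Ar C \<and> Dom C u = Dom C x \<and> Cod C u = R \<and> r1 \<cdot> u = m \<cdot> x \<and> r2 \<cdot> u = m \<cdot> y"
      using xy mt' rA mA
      by (intro exI[of _ "mt \<cdot> PP.tup x y"]) (simp add: comp_rewrite[OF mt(2)] comp_rewrite[OF mt(3)])
  next
    fix u v assume uv: "u \<in> Ar C" "v \<in> Ar C" "Cod C u = R" "Cod C v = Dom C m" "Dom C v = Dom C u"
      "r1 \<cdot> u = m \<cdot> v"
    obtain h where h: "h \<in> Ar C" "Dom C h = Dom C u" "Cod C h = PP" "mt \<cdot> h = u" "\<pi>1 \<cdot> h = v"
      using pullback_factor[OF pb, of u v] uv mt' rA mA by auto
    have "m \<cdot> \<pi>2 \<cdot> h = r2 \<cdot> u" using h mt' rA mA by (simp add: comp_rewrite[OF mt(3)[symmetric]])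
    then show "\<exists>s. s \<in> Ar C \<and> Dom C s = Dom C u \<and> Cod C s = Dom C m \<and> m \<cdot> s = r2 \<cdot> u"
      using h by (intro exI[of _ "\<pi>2 \<cdot> h"]) simp
  qed
  then show thesis by (rule that)
qed

text \<open>Conversely, the factorisation of \<open>m \<times> m\<close> through \<open>R\<close> is the required pullback: closedness
  provides the second component of the comparison map.\<close>
lemma normal_to_imp_bourn_normal:
  assumes normal: "normal_to C m R r1 r2"
  shows "bourn_normal C m"
proof -
  define S where "S = Dom C m"
  have mono: "is_mono C m" and er: "is_equiv_rel C (Cod C m) R r1 r2"
    using normal_toD[OF normal] by simp_all
  have mA: "m \<in> Ar C" "Dom C m = S" using mono_in_Ar[OF mono] S_def by simp_all
  have rA: "r1 \<in> Ar C" "Dom C r1 = R" "Cod C r1 = Cod C m" "r2 \<in> Ar C" "Dom C r2 = R" "Cod C r2 = Cod C m"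
    using equiv_relD[OF er] by simp_all
  have SO: "S \<in> Ob C" using mA by (metis Dom_in_Ob)
  obtain SS \<pi>1 \<pi>2 where "binary_product C S S SS \<pi>1 \<pi>2" using obtain_product[OF SO SO] by blast
  then interpret SS: binary_product C S S SS \<pi>1 \<pi>2 .
  obtain mt where "mt \<in> Ar C" "Dom C mt = Dom C \<pi>1" "Cod C mt = R" "r1 \<cdot> mt = m \<cdot> \<pi>1" "r2 \<cdot> mt = m \<cdot> \<pi>2"
    by (rule normal_to_related[OF normal, of \<pi>1 \<pi>2]) (use mA in simp_all)
  then have mt: "mt \<in> Ar C" "Dom C mt = SS" "Cod C mt = R" "r1 \<cdot> mt = m \<cdot> \<pi>1" "r2 \<cdot> mt = m \<cdot> \<pi>2"
    by simp_all
  have "is_pullback C r1 m mt \<pi>1"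
  proof (rule is_pullbackI)
    fix u v assume uv: "u \<in> Ar C" "v \<in> Ar C" "Dom C v = Dom C u" "Cod C u = Dom C r1" "Cod C v = Dom C m"
      "r1 \<cdot> u = m \<cdot> v"
    obtain s where "s \<in> Ar C" "Dom C s = Dom C u" "Cod C s = Dom C m" "m \<cdot> s = r2 \<cdot> u"
      by (rule normal_to_closed[OF normal, of u v]) (use uv rA in simp_all)
    then have s: "s \<in> Ar C" "Dom C s = Dom C u" "Cod C s = S" "m \<cdot> s = r2 \<cdot> u" using mA by simp_all
    have "mt \<cdot> SS.tup v s = u"
    proof (rule equiv_rel_jointly_mono[OF er])
      show "r1 \<cdot> mt \<cdot> SS.tup v s = r1 \<cdot> u" using uv s mt mA rA by (simp add: comp_rewrite[OF mt(4)])
      show "r2 \<cdot> mt \<cdot> SS.tup v s = r2 \<cdot> u" using uv s mt mA rA by (simp add: comp_rewrite[OF mt(5)])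
    qed (use uv s mt mA rA in simp_all)
    then show "\<exists>h. h \<in> Ar C \<and> Dom C h = Dom C u \<and> Cod C h = Dom C mt \<and> mt \<cdot> h = u \<and> \<pi>1 \<cdot> h = v"
      using uv s mt mA by (intro exI[of _ "SS.tup v s"]) simp
  next
    fix h h' assume hh: "h \<in> Ar C" "h' \<in> Ar C" "Dom C h' = Dom C h" "Cod C h = Dom C mt"
      "Cod C h' = Dom C mt" "mt \<cdot> h = mt \<cdot> h'" "\<pi>1 \<cdot> h = \<pi>1 \<cdot> h'"
    have "m \<cdot> \<pi>2 \<cdot> h = m \<cdot> \<pi>2 \<cdot> h'"
      using hh mt(1-3) rA mA by (simp add: comp_rewrite[OF mt(5)[symmetric]])
    then have "\<pi>2 \<cdot> h = \<pi>2 \<cdot> h'" using mono_cancel[OF mono] hh mt mA by simp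
    then show "h = h'" using SS.product_arrow_eqI[of h h'] hh mt by simp
  qed (use rA mA mt in simp_all)
  then show ?thesis
    unfolding bourn_normal_def using mono er SS.product mt S_def
    by (intro conjI exI[of _ R] exI[of _ r1] exI[of _ r2] exI[of _ SS] exI[of _ \<pi>1] exI[of _ \<pi>2]
        exI[of _ mt]) simp_all
qed

lemma kernel_is_bourn_normal:
  assumes ker: "is_kernel C \<kappa> \<alpha>"
  shows "bourn_normal C \<kappa>"
proof -
  define Y A where "Y = Dom C \<alpha>" and "A = Cod C \<alpha>"
  have \<alpha>: "\<alpha> \<in> Ar C" "Dom C \<alpha> = Y" "Cod C \<alpha> = A" "A \<in> Ob C" and kA: "\<kappa> \<in> Ar C" "Cod C \<kappa> = Y"
    and ak: "\<alpha> \<cdot> \<kappa> = zero_mor C (Dom C \<kappa>) A"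
    using kernelD[OF ker] Y_def A_def by simp_all
  obtain e1 e2 where epb: "is_pullback C \<alpha> \<alpha> e1 e2" using pullback_exists[of \<alpha> \<alpha>] \<alpha> by auto
  define E where "E = Dom C e1"
  have er: "is_equiv_rel C Y E e1 e2" using kernel_pair_equiv_rel[OF epb] Y_def E_def by simp
  have eA: "e1 \<in> Ar C" "Dom C e1 = E" "Cod C e1 = Y" "e2 \<in> Ar C" "Dom C e2 = E" "Cod C e2 = Y"
    "\<alpha> \<cdot> e1 = \<alpha> \<cdot> e2"
    using pullbackD[OF epb] E_def \<alpha> by simp_all
  have "normal_to C \<kappa> E e1 e2"
  proof (rule normal_toI[OF kernel_is_mono[OF ker]])
    show "is_equiv_rel C (Cod C \<kappa>) E e1 e2" using er kA by simp
  next
    fix x y assume xy: "x \<in> Ar C" "y \<in> Ar C" "Cod C x = Dom C \<kappa>" "Cod C y = Dom C \<kappa>" "Dom C y = Dom C x"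
    have "\<alpha> \<cdot> \<kappa> \<cdot> x = \<alpha> \<cdot> \<kappa> \<cdot> y" using xy kA \<alpha> by (simp add: comp_rewrite[OF ak])
    then obtain u where "u \<in> Ar C" "Dom C u = Dom C (\<kappa> \<cdot> x)" "Cod C u = Dom C e1"
      "e1 \<cdot> u = \<kappa> \<cdot> x" "e2 \<cdot> u = \<kappa> \<cdot> y"
      by (rule pullback_factor[OF epb, rotated 5]) (use xy kA \<alpha> in simp_all)
    then show "\<exists>u. u \<in> Ar C \<and> Dom C u = Dom C x \<and> Cod C u = E \<and> e1 \<cdot> u = \<kappa> \<cdot> x \<and> e2 \<cdot> u = \<kappa> \<cdot> y"
      using xy kA E_def by (intro exI[of _ u]) simp
  next
    fix u v assume uv: "u \<in> Ar C" "v \<in> Ar C" "Cod C u = E" "Cod C v = Dom C \<kappa>" "Dom C v = Dom C u"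
      "e1 \<cdot> u = \<kappa> \<cdot> v"
    have "\<alpha> \<cdot> e2 \<cdot> u = \<alpha> \<cdot> \<kappa> \<cdot> v" using uv eA(1-6) \<alpha> by (simp add: comp_rewrite[OF eA(7)[symmetric]])
    also have "\<dots> = zero_mor C (Dom C u) (Cod C \<alpha>)" using uv kA \<alpha> by (simp add: comp_rewrite[OF ak])
    finally show "\<exists>s. s \<in> Ar C \<and> Dom C s = Dom C u \<and> Cod C s = Dom C \<kappa> \<and> \<kappa> \<cdot> s = e2 \<cdot> u"
      using kernel_factor[OF ker, of "e2 \<cdot> u"] uv eA \<alpha> by auto
  qed
  then show ?thesis by (rule normal_to_imp_bourn_normal)
qed

lemma normal_zero_class_kernel:
  assumes normal: "normal_to C n R r1 r2"
    and k: "k \<in> Ar C" "Dom C k = Dom C n" "Cod C k = R" "r1 \<cdot> k = zero_mor C (Dom C n) (Cod C n)" "r2 \<cdot> k = n"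
  shows "is_kernel C k r1"
  unfolding is_kernel_def
proof (intro conjI ballI impI)
  define S Y where "S = Dom C n" and "Y = Cod C n"
  have mono: "is_mono C n" and er: "is_equiv_rel C Y R r1 r2"
    using normal_toD[OF normal] Y_def by simp_all
  have nA: "n \<in> Ar C" "Dom C n = S" "Cod C n = Y" "S \<in> Ob C" "Y \<in> Ob C"
    using mono_in_Ar[OF mono] S_def Y_def by simp_all
  note rA = equiv_relD[OF er]
  fix W g assume W: "W \<in> Ob C" and g: "g \<in> hom C W (Dom C r1)" and g0: "r1 \<cdot> g = zero_mor C W (Cod C r1)"
  have gA: "g \<in> Ar C" "Dom C g = W" "Cod C g = R" using g rA by simp_all
  have "r1 \<cdot> g = n \<cdot> zero_mor C W S" using g0 nA rA W by simp
  then obtain s where s: "s \<in> Ar C" "Dom C s = Dom C g" "Cod C s = Dom C n" "n \<cdot> s = r2 \<cdot> g"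
    by (rule normal_to_closed[OF normal, rotated 5]) (use gA nA W in simp_all)
  then have s: "s \<in> Ar C" "Dom C s = W" "Cod C s = S" "n \<cdot> s = r2 \<cdot> g" using gA nA by simp_all
  have ks: "k \<cdot> s = g"
  proof (rule equiv_rel_jointly_mono[OF er])
    show "r1 \<cdot> k \<cdot> s = r1 \<cdot> g" using k s nA rA g0 by (simp add: comp_rewrite[OF k(4)])
    show "r2 \<cdot> k \<cdot> s = r2 \<cdot> g" using k s nA rA by (simp add: comp_rewrite[OF k(5)])
  qed (use k s gA nA in simp_all)
  show "\<exists>!h. h \<in> hom C W (Dom C k) \<and> k \<cdot> h = g"
  proof (rule ex1I[of _ s])
    show "s \<in> hom C W (Dom C k) \<and> k \<cdot> s = g" using s ks k nA by simp
  next
    fix h assume h: "h \<in> hom C W (Dom C k) \<and> k \<cdot> h = g"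
    then have hA: "h \<in> Ar C" "Dom C h = W" "Cod C h = S" and hk: "k \<cdot> h = g" using k nA by simp_all
    have "r2 \<cdot> k \<cdot> h = n \<cdot> h" using hA k nA rA by (simp add: comp_rewrite[OF k(5)])
    then have "n \<cdot> h = r2 \<cdot> g" using hk by simp
    then show "h = s" using mono_cancel[OF mono, of h s] h s k nA by simp
  qed
qed (use normal_toD[OF normal] equiv_relD[OF normal_to_equiv_rel[OF normal]] k in simp_all)

text \<open>Strong completeness applied to the zero class gives \<open>\<rho> : R \<rightarrow> B\<close> with \<open>\<rho> \<circ> mt = \<pi>2\<close>;
  composed with the reflexivity \<open>d : Y \<rightarrow> R\<close>, which restricts to the diagonal of \<open>B\<close>, it
  retracts \<open>n\<close>.\<close>
lemma strong_complete_imp_complete_star: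
  assumes sc: "strong_complete C B" shows "complete_star C B"
  unfolding complete_star_def
proof (intro conjI allI impI)
  show "B \<in> Ob C" using sc unfolding strong_complete_def by blast
  fix n assume "bourn_normal C n \<and> Dom C n = B"
  then obtain R r1 r2 where normal: "normal_to C n R r1 r2" and dn: "Dom C n = B"
    using bourn_normal_imp_normal_to by blast
  define Y where "Y = Cod C n"
  have mono: "is_mono C n" and er: "is_equiv_rel C Y R r1 r2" using normal_toD[OF normal] Y_def by simp_all
  have nA: "n \<in> Ar C" "Dom C n = B" "Cod C n = Y" using mono_in_Ar[OF mono] dn Y_def by simp_all
  note rA = equiv_relD[OF er]
  obtain PP \<pi>1 \<pi>2 where pp: "binary_product C B B PP \<pi>1 \<pi>2" using obtain_product[of B B] nA by (metis Dom_in_Ob)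
  interpret PP: binary_product C B B PP \<pi>1 \<pi>2 by (rule pp)
  obtain mt where "mt \<in> Ar C" "Dom C mt = Dom C \<pi>1" "Cod C mt = R" "r1 \<cdot> mt = n \<cdot> \<pi>1" "r2 \<cdot> mt = n \<cdot> \<pi>2"
    by (rule normal_to_related[OF normal, of \<pi>1 \<pi>2]) (use nA in simp_all)
  then have mt: "mt \<in> Ar C" "Dom C mt = PP" "Cod C mt = R" "r1 \<cdot> mt = n \<cdot> \<pi>1" "r2 \<cdot> mt = n \<cdot> \<pi>2"
    by simp_all
  obtain d where d: "d \<in> Ar C" "Dom C d = Y" "Cod C d = R" "r1 \<cdot> d = Idm C Y" "r2 \<cdot> d = Idm C Y"
    by (rule equiv_rel_refl[OF er])
  have "is_kernel C (mt \<cdot> PP.inj2) r1"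
    using mt nA rA
    by (intro normal_zero_class_kernel[OF normal]) (simp_all add: comp_rewrite[OF mt(4)] comp_rewrite[OF mt(5)])
  moreover have "is_split_epi C r1" unfolding is_split_epi_def using d rA by (intro conjI bexI[of _ d]) simp_all
  ultimately have "protosplit_mono C (mt \<cdot> PP.inj2)" unfolding protosplit_mono_def by blast
  moreover have "\<forall>k. protosplit_mono C k \<and> Dom C k = B \<longrightarrow> (\<exists>!r. r \<in> hom C (Cod C k) B \<and> r \<cdot> k = Idm C B)"
    using sc unfolding strong_complete_def by blast
  moreover have "Dom C (mt \<cdot> PP.inj2) = B" using mt by simp
  ultimately have "\<exists>!r. r \<in> hom C (Cod C (mt \<cdot> PP.inj2)) B \<and> r \<cdot> (mt \<cdot> PP.inj2) = Idm C B"
    by blast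
  then obtain \<rho> where \<rho>: "\<rho> \<in> hom C R B" "\<rho> \<cdot> mt \<cdot> PP.inj2 = Idm C B" using mt by auto
  then have rm: "\<rho> \<cdot> mt = \<pi>2" using PP.strong_complete_proj2_unique[OF sc, of "\<rho> \<cdot> mt"] mt by simp
  define \<Delta> where "\<Delta> = PP.tup (Idm C B) (Idm C B)"
  have DA: "\<Delta> \<in> Ar C" "Dom C \<Delta> = B" "Cod C \<Delta> = PP" "\<pi>1 \<cdot> \<Delta> = Idm C B" "\<pi>2 \<cdot> \<Delta> = Idm C B"
    unfolding \<Delta>_def by simp_all
  have dn: "d \<cdot> n = mt \<cdot> \<Delta>"
  proof (rule equiv_rel_jointly_mono[OF er])
    show "r1 \<cdot> d \<cdot> n = r1 \<cdot> mt \<cdot> \<Delta>" using d nA DA mt rA by (simp add: comp_rewrite[OF d(4)] comp_rewrite[OF mt(4)])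
    show "r2 \<cdot> d \<cdot> n = r2 \<cdot> mt \<cdot> \<Delta>" using d nA DA mt rA by (simp add: comp_rewrite[OF d(5)] comp_rewrite[OF mt(5)])
  qed (use d nA DA mt in simp_all)
  have "(\<rho> \<cdot> d) \<cdot> n = \<rho> \<cdot> mt \<cdot> \<Delta>" using \<rho> d nA dn by simp
  also have "\<dots> = Idm C B" using \<rho> mt DA by (simp add: comp_rewrite[OF rm])
  finally show "is_split_mono C n"
    unfolding is_split_mono_def using \<rho> d nA by (intro conjI bexI[of _ "\<rho> \<cdot> d"]) simp_all
qed

end

text \<open>\<open>(R, t1, t2)\<close> is the intersection of the relations \<open>R1\<close> and \<open>R2\<close> on \<open>Y\<close>, that is, the
  pullback of \<open>\<langle>r11, r12\<rangle>\<close> and \<open>\<langle>r21, r22\<rangle>\<close> described without forming \<open>Y \<times> Y\<close>.\<close>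
locale equiv_rel_meet = protomodular_category +
  fixes Y R1 r11 r12 R2 r21 r22 R t1 t2
  assumes er1: "is_equiv_rel C Y R1 r11 r12" and er2: "is_equiv_rel C Y R2 r21 r22"
    and t1: "t1 \<in> Ar C" "Dom C t1 = R" "Cod C t1 = R1" and t2: "t2 \<in> Ar C" "Dom C t2 = R" "Cod C t2 = R2"
    and meet1: "r21 \<cdot> t2 = r11 \<cdot> t1" and meet2: "r22 \<cdot> t2 = r12 \<cdot> t1"
    and meet_pair: "\<And>u1 u2. u1 \<in> Ar C \<Longrightarrow> u2 \<in> Ar C \<Longrightarrow> Dom C u2 = Dom C u1 \<Longrightarrow> Cod C u1 = R1 \<Longrightarrow>
      Cod C u2 = R2 \<Longrightarrow> r11 \<cdot> u1 = r21 \<cdot> u2 \<Longrightarrow> r12 \<cdot> u1 = r22 \<cdot> u2 \<Longrightarrow>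
      \<exists>h. h \<in> Ar C \<and> Dom C h = Dom C u1 \<and> Cod C h = R \<and> t1 \<cdot> h = u1 \<and> t2 \<cdot> h = u2"
    and meet_unique: "\<And>h h'. h \<in> Ar C \<Longrightarrow> h' \<in> Ar C \<Longrightarrow> Dom C h' = Dom C h \<Longrightarrow> Cod C h = R \<Longrightarrow>
      Cod C h' = R \<Longrightarrow> t1 \<cdot> h = t1 \<cdot> h' \<Longrightarrow> t2 \<cdot> h = t2 \<cdot> h' \<Longrightarrow> h = h'"
begin

lemma meet_pairE:
  assumes "u1 \<in> Ar C" "u2 \<in> Ar C" "Dom C u2 = Dom C u1" "Cod C u1 = R1" "Cod C u2 = R2"
    "r11 \<cdot> u1 = r21 \<cdot> u2" "r12 \<cdot> u1 = r22 \<cdot> u2"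
  obtains h where "h \<in> Ar C" "Dom C h = Dom C u1" "Cod C h = R" "t1 \<cdot> h = u1" "t2 \<cdot> h = u2"
  using meet_pair[OF assms] by blast

lemma meet_trans:
  assumes q: "q1 \<in> Ar C" "Cod C q1 = R" "q2 \<in> Ar C" "Cod C q2 = R" "Dom C q2 = Dom C q1"
    "r12 \<cdot> t1 \<cdot> q1 = r11 \<cdot> t1 \<cdot> q2"
  obtains \<tau> where "\<tau> \<in> Ar C" "Dom C \<tau> = Dom C q1" "Cod C \<tau> = R"
    "r11 \<cdot> t1 \<cdot> \<tau> = r11 \<cdot> t1 \<cdot> q1" "r12 \<cdot> t1 \<cdot> \<tau> = r12 \<cdot> t1 \<cdot> q2"
proof -
  note r1A = equiv_relD[OF er1] and r2A = equiv_relD[OF er2]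
  obtain \<tau>1 where \<tau>1: "\<tau>1 \<in> Ar C" "Dom C \<tau>1 = Dom C q1" "Cod C \<tau>1 = R1"
    "r11 \<cdot> \<tau>1 = r11 \<cdot> t1 \<cdot> q1" "r12 \<cdot> \<tau>1 = r12 \<cdot> t1 \<cdot> q2"
    using equiv_rel_trans_span[OF er1, of "t1 \<cdot> q1" "t1 \<cdot> q2"] q t1 by auto
  have "r22 \<cdot> t2 \<cdot> q1 = r21 \<cdot> t2 \<cdot> q2"
    using q t1 t2 r1A r2A by (simp add: comp_rewrite[OF meet1] comp_rewrite[OF meet2])
  then obtain \<tau>2 where \<tau>2: "\<tau>2 \<in> Ar C" "Dom C \<tau>2 = Dom C q1" "Cod C \<tau>2 = R2"
    "r21 \<cdot> \<tau>2 = r21 \<cdot> t2 \<cdot> q1" "r22 \<cdot> \<tau>2 = r22 \<cdot> t2 \<cdot> q2"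
    using equiv_rel_trans_span[OF er2, of "t2 \<cdot> q1" "t2 \<cdot> q2"] q t2 by auto
  have "r11 \<cdot> \<tau>1 = r21 \<cdot> \<tau>2" "r12 \<cdot> \<tau>1 = r22 \<cdot> \<tau>2"
    using \<tau>1 \<tau>2 q t1 t2 r1A r2A by (simp_all add: comp_rewrite[OF meet1] comp_rewrite[OF meet2])
  then obtain \<tau> where \<tau>: "\<tau> \<in> Ar C" "Dom C \<tau> = Dom C q1" "Cod C \<tau> = R" "t1 \<cdot> \<tau> = \<tau>1"
    using meet_pairE[of \<tau>1 \<tau>2] \<tau>1 \<tau>2 by metis
  then show thesis using that[of \<tau>] \<tau>1 by simp
qed

lemma is_equiv_rel: "is_equiv_rel C Y R (r11 \<cdot> t1) (r12 \<cdot> t1)"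
proof -
  note r1A = equiv_relD[OF er1] and r2A = equiv_relD[OF er2]
  show ?thesis
    unfolding is_equiv_rel_def
  proof (intro conjI ballI impI allI)
    show "r11 \<cdot> t1 \<in> hom C R Y" "r12 \<cdot> t1 \<in> hom C R Y" using t1 r1A by simp_all
  next
    fix W a b assume ab: "W \<in> Ob C" "a \<in> hom C W R" "b \<in> hom C W R" "(r11 \<cdot> t1) \<cdot> a = (r11 \<cdot> t1) \<cdot> b \<and> (r12 \<cdot> t1) \<cdot> a = (r12 \<cdot> t1) \<cdot> b"
    then have "t1 \<cdot> a = t1 \<cdot> b" using equiv_rel_jointly_mono[OF er1, of "t1 \<cdot> a" "t1 \<cdot> b"] t1 r1A by simp
    moreover have "r21 \<cdot> t2 \<cdot> a = r21 \<cdot> t2 \<cdot> b" "r22 \<cdot> t2 \<cdot> a = r22 \<cdot> t2 \<cdot> b"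
      using ab t1 t2 r1A r2A by (simp_all add: comp_rewrite[OF meet1] comp_rewrite[OF meet2])
    then have "t2 \<cdot> a = t2 \<cdot> b" using equiv_rel_jointly_mono[OF er2, of "t2 \<cdot> a" "t2 \<cdot> b"] ab t2 by simp
    ultimately show "a = b" using meet_unique[of a b] ab by simp
  next
    obtain d1 where d1: "d1 \<in> Ar C" "Dom C d1 = Y" "Cod C d1 = R1" "r11 \<cdot> d1 = Idm C Y" "r12 \<cdot> d1 = Idm C Y"
      by (rule equiv_rel_refl[OF er1])
    obtain d2 where d2: "d2 \<in> Ar C" "Dom C d2 = Y" "Cod C d2 = R2" "r21 \<cdot> d2 = Idm C Y" "r22 \<cdot> d2 = Idm C Y"
      by (rule equiv_rel_refl[OF er2])
    obtain d where d: "d \<in> Ar C" "Dom C d = Y" "Cod C d = R" "t1 \<cdot> d = d1"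
      using meet_pairE[of d1 d2] d1 d2 by metis
    then show "\<exists>d \<in> hom C Y R. (r11 \<cdot> t1) \<cdot> d = Idm C Y \<and> (r12 \<cdot> t1) \<cdot> d = Idm C Y"
      using d1 t1 r1A by (intro bexI[of _ d]) simp_all
  next
    obtain s1 where s1: "s1 \<in> Ar C" "Dom C s1 = R1" "Cod C s1 = R1" "r11 \<cdot> s1 = r12" "r12 \<cdot> s1 = r11"
      by (rule equiv_rel_sym[OF er1])
    obtain s2 where s2: "s2 \<in> Ar C" "Dom C s2 = R2" "Cod C s2 = R2" "r21 \<cdot> s2 = r22" "r22 \<cdot> s2 = r21"
      by (rule equiv_rel_sym[OF er2])
    have "r11 \<cdot> s1 \<cdot> t1 = r21 \<cdot> s2 \<cdot> t2" "r12 \<cdot> s1 \<cdot> t1 = r22 \<cdot> s2 \<cdot> t2"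
      using s1 s2 t1 t2 r1A r2A meet1 meet2
      by (simp_all add: comp_rewrite[OF s1(4)] comp_rewrite[OF s1(5)] comp_rewrite[OF s2(4)] comp_rewrite[OF s2(5)])
    then obtain \<sigma> where \<sigma>: "\<sigma> \<in> Ar C" "Dom C \<sigma> = R" "Cod C \<sigma> = R" "t1 \<cdot> \<sigma> = s1 \<cdot> t1"
      using meet_pairE[of "s1 \<cdot> t1" "s2 \<cdot> t2"] s1 s2 t1 t2 by (metis comp_in_Ar Dom_comp Cod_comp)
    then show "\<exists>\<sigma> \<in> hom C R R. (r11 \<cdot> t1) \<cdot> \<sigma> = r12 \<cdot> t1 \<and> (r12 \<cdot> t1) \<cdot> \<sigma> = r11 \<cdot> t1"
      using s1 t1 r1A by (intro bexI[of _ \<sigma>]) (simp_all add: comp_rewrite[OF s1(4)] comp_rewrite[OF s1(5)])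
  next
    fix q1 q2 assume "is_pullback C (r12 \<cdot> t1) (r11 \<cdot> t1) q1 q2"
    then have q: "q1 \<in> Ar C" "Cod C q1 = R" "q2 \<in> Ar C" "Cod C q2 = R" "Dom C q2 = Dom C q1"
      "r12 \<cdot> t1 \<cdot> q1 = r11 \<cdot> t1 \<cdot> q2"
      using pullbackD[of "r12 \<cdot> t1" "r11 \<cdot> t1" q1 q2] t1 r1A by simp_all
    obtain \<tau> where "\<tau> \<in> Ar C" "Dom C \<tau> = Dom C q1" "Cod C \<tau> = R"
      "r11 \<cdot> t1 \<cdot> \<tau> = r11 \<cdot> t1 \<cdot> q1" "r12 \<cdot> t1 \<cdot> \<tau> = r12 \<cdot> t1 \<cdot> q2"
      by (rule meet_trans[OF q])
    then show "\<exists>\<tau> \<in> hom C (Dom C q1) R. (r11 \<cdot> t1) \<cdot> \<tau> = (r11 \<cdot> t1) \<cdot> q1 \<and> (r12 \<cdot> t1) \<cdot> \<tau> = (r12 \<cdot> t1) \<cdot> q2"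
      using t1 r1A q by (intro bexI[of _ \<tau>]) simp_all
  qed
qed

end

lemma (in protomodular_category) equiv_rel_meet_exists:
  assumes er1: "is_equiv_rel C Y R1 r11 r12" and er2: "is_equiv_rel C Y R2 r21 r22"
  obtains R t1 t2 where "equiv_rel_meet C Y R1 r11 r12 R2 r21 r22 R t1 t2"
proof -
  note r1A = equiv_relD[OF er1] and r2A = equiv_relD[OF er2]
  obtain YY c1 c2 where "binary_product C Y Y YY c1 c2" using obtain_product[of Y Y] r1A by (metis Cod_in_Ob)
  then interpret YY: binary_product C Y Y YY c1 c2 .
  define \<rho>1 \<rho>2 where "\<rho>1 = YY.tup r11 r12" and "\<rho>2 = YY.tup r21 r22"
  have rhoA: "\<rho>1 \<in> Ar C" "Dom C \<rho>1 = R1" "Cod C \<rho>1 = YY" "\<rho>2 \<in> Ar C" "Dom C \<rho>2 = R2" "Cod C \<rho>2 = YY"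
    unfolding \<rho>1_def \<rho>2_def using r1A r2A by simp_all
  obtain t1 t2 where tpb: "is_pullback C \<rho>1 \<rho>2 t1 t2" using pullback_exists[of \<rho>1 \<rho>2] rhoA by auto
  define R where "R = Dom C t1"
  have tA: "t1 \<in> Ar C" "Dom C t1 = R" "Cod C t1 = R1" "t2 \<in> Ar C" "Dom C t2 = R" "Cod C t2 = R2"
    using pullbackD[OF tpb] R_def rhoA by simp_all
  have tt: "YY.tup (r11 \<cdot> t1) (r12 \<cdot> t1) = YY.tup (r21 \<cdot> t2) (r22 \<cdot> t2)"
    using pullbackD(9)[OF tpb] tA r1A r2A unfolding \<rho>1_def \<rho>2_def by simp
  have "c1 \<cdot> YY.tup (r11 \<cdot> t1) (r12 \<cdot> t1) = c1 \<cdot> YY.tup (r21 \<cdot> t2) (r22 \<cdot> t2)"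
    "c2 \<cdot> YY.tup (r11 \<cdot> t1) (r12 \<cdot> t1) = c2 \<cdot> YY.tup (r21 \<cdot> t2) (r22 \<cdot> t2)" using tt by simp_all
  then have meet: "r21 \<cdot> t2 = r11 \<cdot> t1" "r22 \<cdot> t2 = r12 \<cdot> t1" using tA r1A r2A by simp_all
  have "equiv_rel_meet C Y R1 r11 r12 R2 r21 r22 R t1 t2"
  proof (unfold_locales)
    fix u1 u2 assume u: "u1 \<in> Ar C" "u2 \<in> Ar C" "Dom C u2 = Dom C u1" "Cod C u1 = R1" "Cod C u2 = R2"
      "r11 \<cdot> u1 = r21 \<cdot> u2" "r12 \<cdot> u1 = r22 \<cdot> u2"
    have "\<rho>1 \<cdot> u1 = \<rho>2 \<cdot> u2" unfolding \<rho>1_def \<rho>2_def using u r1A r2A by simp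
    then show "\<exists>h. h \<in> Ar C \<and> Dom C h = Dom C u1 \<and> Cod C h = R \<and> t1 \<cdot> h = u1 \<and> t2 \<cdot> h = u2"
      using pullback_factor[OF tpb, of u1 u2] u rhoA tA by (simp, blast)
  next
    fix h h' assume "h \<in> Ar C" "h' \<in> Ar C" "Dom C h' = Dom C h" "Cod C h = R" "Cod C h' = R"
      "t1 \<cdot> h = t1 \<cdot> h'" "t2 \<cdot> h = t2 \<cdot> h'"
    then show "h = h'" using pullback_arrow_eqI[OF tpb, of h h'] tA by simp
  qed (use protomodular er1 er2 tA meet in simp_all)
  then show thesis by (rule that)
qed

context equiv_rel_meet begin

lemma normal_meet_related:
  assumes n1: "normal_to C m1 R1 r11 r12" and n2: "normal_to C m2 R2 r21 r22"
    and pb: "is_pullback C m1 m2 a1 a2"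
    and xy: "x \<in> Ar C" "y \<in> Ar C" "Cod C x = Dom C a1" "Cod C y = Dom C a1" "Dom C y = Dom C x"
  obtains u where "u \<in> Ar C" "Dom C u = Dom C x" "Cod C u = R"
    "r11 \<cdot> t1 \<cdot> u = m1 \<cdot> a1 \<cdot> x" "r12 \<cdot> t1 \<cdot> u = m1 \<cdot> a1 \<cdot> y"
proof -
  note mA = pullbackD(1-8)[OF pb]
  obtain u1 where "u1 \<in> Ar C" "Dom C u1 = Dom C (a1 \<cdot> x)" "Cod C u1 = R1"
    "r11 \<cdot> u1 = m1 \<cdot> a1 \<cdot> x" "r12 \<cdot> u1 = m1 \<cdot> a1 \<cdot> y"
    by (rule normal_to_related[OF n1, of "a1 \<cdot> x" "a1 \<cdot> y"]) (use xy mA in simp_all)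
  then have u1: "u1 \<in> Ar C" "Dom C u1 = Dom C x" "Cod C u1 = R1"
    "r11 \<cdot> u1 = m1 \<cdot> a1 \<cdot> x" "r12 \<cdot> u1 = m1 \<cdot> a1 \<cdot> y" using xy mA by simp_all
  obtain u2 where "u2 \<in> Ar C" "Dom C u2 = Dom C (a2 \<cdot> x)" "Cod C u2 = R2"
    "r21 \<cdot> u2 = m2 \<cdot> a2 \<cdot> x" "r22 \<cdot> u2 = m2 \<cdot> a2 \<cdot> y"
    by (rule normal_to_related[OF n2, of "a2 \<cdot> x" "a2 \<cdot> y"]) (use xy mA in simp_all)
  then have u2: "u2 \<in> Ar C" "Dom C u2 = Dom C x" "Cod C u2 = R2"
    "r21 \<cdot> u2 = m2 \<cdot> a2 \<cdot> x" "r22 \<cdot> u2 = m2 \<cdot> a2 \<cdot> y" using xy mA by simp_all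
  have "m2 \<cdot> a2 \<cdot> x = m1 \<cdot> a1 \<cdot> x" "m2 \<cdot> a2 \<cdot> y = m1 \<cdot> a1 \<cdot> y"
    using xy mA by (simp_all add: comp_rewrite[OF pullbackD(9)[OF pb, symmetric]])
  moreover obtain u where "u \<in> Ar C" "Dom C u = Dom C u1" "Cod C u = R" "t1 \<cdot> u = u1" "t2 \<cdot> u = u2"
    by (rule meet_pairE[of u1 u2]) (use u1 u2 calculation in simp_all)
  ultimately show thesis using that[of u] u1 by simp
qed

lemma normal_meet_closed:
  assumes n1: "normal_to C m1 R1 r11 r12" and n2: "normal_to C m2 R2 r21 r22"
    and pb: "is_pullback C m1 m2 a1 a2"
    and uv: "u \<in> Ar C" "Cod C u = R" "v \<in> Ar C" "Cod C v = Dom C a1" "Dom C v = Dom C u"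
      "r11 \<cdot> t1 \<cdot> u = m1 \<cdot> a1 \<cdot> v"
  obtains s where "s \<in> Ar C" "Dom C s = Dom C u" "Cod C s = Dom C a1" "m1 \<cdot> a1 \<cdot> s = r12 \<cdot> t1 \<cdot> u"
proof -
  note mA = pullbackD(1-8)[OF pb] and r1A = equiv_relD[OF er1] and r2A = equiv_relD[OF er2]
  obtain s1 where "s1 \<in> Ar C" "Dom C s1 = Dom C (t1 \<cdot> u)" "Cod C s1 = Dom C m1" "m1 \<cdot> s1 = r12 \<cdot> t1 \<cdot> u"
    by (rule normal_to_closed[OF n1, of "t1 \<cdot> u" "a1 \<cdot> v"]) (use uv t1 mA in simp_all)
  then have s1: "s1 \<in> Ar C" "Dom C s1 = Dom C u" "Cod C s1 = Dom C m1" "m1 \<cdot> s1 = r12 \<cdot> t1 \<cdot> u"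
    using uv t1 by simp_all
  have "r21 \<cdot> t2 \<cdot> u = m2 \<cdot> a2 \<cdot> v"
    using uv t1 t2 mA r1A r2A by (simp add: comp_rewrite[OF meet1] comp_rewrite[OF pullbackD(9)[OF pb, symmetric]])
  then obtain s2 where "s2 \<in> Ar C" "Dom C s2 = Dom C (t2 \<cdot> u)" "Cod C s2 = Dom C m2" "m2 \<cdot> s2 = r22 \<cdot> t2 \<cdot> u"
    by (rule normal_to_closed[OF n2, rotated 5]) (use uv t2 mA in simp_all)
  then have s2: "s2 \<in> Ar C" "Dom C s2 = Dom C u" "Cod C s2 = Dom C m2" "m2 \<cdot> s2 = r12 \<cdot> t1 \<cdot> u"
    using uv t1 t2 r1A r2A by (simp_all add: comp_rewrite[OF meet2])
  obtain s where "s \<in> Ar C" "Dom C s = Dom C s1" "Cod C s = Dom C a1" "a1 \<cdot> s = s1" "a2 \<cdot> s = s2"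
    by (rule pullback_factor[OF pb, of s1 s2]) (use s1 s2 mA in simp_all)
  then show thesis using that[of s] s1 mA by simp
qed

end

context protomodular_category begin

text \<open>The intersection of two normal subobjects is normal to the intersection of the relations:
  if \<open>x \<in> S\<close> and \<open>x R y\<close>, then \<open>y \<in> S1\<close> and \<open>y \<in> S2\<close> by closedness of \<open>S1\<close> and \<open>S2\<close>.\<close>
lemma bourn_normal_meet:
  assumes bn1: "bourn_normal C m1" and bn2: "bourn_normal C m2" and pb: "is_pullback C m1 m2 a1 a2"
  shows "bourn_normal C (m1 \<cdot> a1)"
proof -
  obtain R1 r11 r12 where n1: "normal_to C m1 R1 r11 r12" using bourn_normal_imp_normal_to[OF bn1] .
  obtain R2 r21 r22 where n2: "normal_to C m2 R2 r21 r22" using bourn_normal_imp_normal_to[OF bn2] .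
  note mA = pullbackD[OF pb]
  have er1: "is_equiv_rel C (Cod C m1) R1 r11 r12" and er2: "is_equiv_rel C (Cod C m1) R2 r21 r22"
    using normal_to_equiv_rel[OF n1] normal_to_equiv_rel[OF n2] mA by simp_all
  note r1A = equiv_relD[OF er1]
  obtain R t1 t2 where "equiv_rel_meet C (Cod C m1) R1 r11 r12 R2 r21 r22 R t1 t2"
    using equiv_rel_meet_exists[OF er1 er2] .
  then interpret M: equiv_rel_meet C "Cod C m1" R1 r11 r12 R2 r21 r22 R t1 t2 .
  have mono: "is_mono C (m1 \<cdot> a1)"
    using mono_comp[OF normal_to_mono[OF n1] pullback_mono[OF pb normal_to_mono[OF n2]]] mA by simp
  have "normal_to C (m1 \<cdot> a1) R (r11 \<cdot> t1) (r12 \<cdot> t1)"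
  proof (rule normal_toI[OF mono])
    show "is_equiv_rel C (Cod C (m1 \<cdot> a1)) R (r11 \<cdot> t1) (r12 \<cdot> t1)" using M.is_equiv_rel mA by simp
  next
    fix x y assume xy: "x \<in> Ar C" "y \<in> Ar C" "Cod C x = Dom C (m1 \<cdot> a1)" "Cod C y = Dom C (m1 \<cdot> a1)"
      "Dom C y = Dom C x"
    obtain u where "u \<in> Ar C" "Dom C u = Dom C x" "Cod C u = R"
      "r11 \<cdot> t1 \<cdot> u = m1 \<cdot> a1 \<cdot> x" "r12 \<cdot> t1 \<cdot> u = m1 \<cdot> a1 \<cdot> y"
      by (rule M.normal_meet_related[OF n1 n2 pb, of x y]) (use xy mA in simp_all)
    then show "\<exists>u. u \<in> Ar C \<and> Dom C u = Dom C x \<and> Cod C u = R \<and>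
        (r11 \<cdot> t1) \<cdot> u = (m1 \<cdot> a1) \<cdot> x \<and> (r12 \<cdot> t1) \<cdot> u = (m1 \<cdot> a1) \<cdot> y"
      using M.t1 mA(1-8) r1A xy by (intro exI[of _ u]) simp
  next
    fix u v assume uv: "u \<in> Ar C" "v \<in> Ar C" "Cod C u = R" "Cod C v = Dom C (m1 \<cdot> a1)" "Dom C v = Dom C u"
      "(r11 \<cdot> t1) \<cdot> u = (m1 \<cdot> a1) \<cdot> v"
    obtain s where "s \<in> Ar C" "Dom C s = Dom C u" "Cod C s = Dom C a1" "m1 \<cdot> a1 \<cdot> s = r12 \<cdot> t1 \<cdot> u"
      by (rule M.normal_meet_closed[OF n1 n2 pb, of u v]) (use uv M.t1 mA(1-8) r1A in simp_all)
    then show "\<exists>s. s \<in> Ar C \<and> Dom C s = Dom C u \<and> Cod C s = Dom C (m1 \<cdot> a1) \<and>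
        (m1 \<cdot> a1) \<cdot> s = (r12 \<cdot> t1) \<cdot> u"
      using uv M.t1 mA(1-8) r1A by (intro exI[of _ s]) simp
  qed
  then show ?thesis by (rule normal_to_imp_bourn_normal)
qed

end

section \<open>Normal monomorphisms out of a product with an abelian factor\<close>

context binary_product begin

text \<open>The witness is \<open>m \<circ> \<theta>\<close> with \<open>\<theta> : (X \<times> Y) \<times> Y \<rightarrow> X \<times> Y\<close>, \<open>((x, y), y') \<mapsto> (x, y + y')\<close>,
  the addition \<open>Y \<times> Y \<rightarrow> Y\<close> being the map witnessing that \<open>Y\<close> is abelian.\<close>
lemma commute_with_abelian_injection:
  assumes ab: "abelian_obj C Y" and m: "m \<in> Ar C" "Dom C m = P"
  shows "commute C m (m \<cdot> inj2)"
proof -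
  obtain QY a1 a2 add where QY: "binary_product C Y Y QY a1 a2" and add: "add \<in> hom C QY Y"
    "add \<cdot> binary_product.inj1 C Y Y a1 a2 = Idm C Y" "add \<cdot> binary_product.inj2 C Y Y a1 a2 = Idm C Y"
    using ab unfolding abelian_obj_def by (auto elim: commuteE)
  interpret QY: binary_product C Y Y QY a1 a2 by (rule QY)
  have add: "add \<in> Ar C" "Dom C add = QY" "Cod C add = Y" "add \<cdot> QY.inj1 = Idm C Y" "add \<cdot> QY.inj2 = Idm C Y"
    using add by simp_all
  obtain PY b1 b2 where "binary_product C P Y PY b1 b2" using obtain_product[of P Y] product_Ob by blast
  then interpret PY: binary_product C P Y PY b1 b2 .
  define \<theta> where "\<theta> = tup (p1 \<cdot> b1) (add \<cdot> QY.tup (p2 \<cdot> b1) b2)"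
  have \<theta>: "\<theta> \<in> Ar C" "Dom C \<theta> = PY" "Cod C \<theta> = P"
    unfolding \<theta>_def using add by simp_all
  have "\<theta> \<cdot> PY.inj1 = Idm C P" unfolding \<theta>_def using add by (simp add: comp_rewrite[OF add(4)])
  moreover have "\<theta> \<cdot> PY.inj2 = inj2" unfolding \<theta>_def using add by (simp add: comp_rewrite[OF add(5)])
  ultimately show ?thesis
    using m \<theta> PY.binary_product_axioms
    by (intro commuteI[of m "m \<cdot> inj2" PY b1 b2 "m \<cdot> \<theta>"]) simp_all
qed

text \<open>Extend \<open>(m, z)\<close> to \<open>\<psi> : X \<times> W \<rightarrow> T\<close> through the map witnessing their commutation;
  \<open>\<psi>\<close> restricts to \<open>m \<circ> inj1\<close> and to \<open>z \<circ> b = m \<circ> a\<close>, so it factors through \<open>m\<close>, and strong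
  completeness of \<open>X\<close> forces the first component of the factorisation to be the projection.\<close>
lemma commuting_arrow_proj1_zero:
  assumes sc: "strong_complete C X" and m: "is_mono C m" "m \<in> Ar C" "Dom C m = P"
    and mz: "commute C m z"
    and a: "a \<in> Ar C" "Cod C a = P" and b: "b \<in> Ar C" "Cod C b = Dom C z" "Dom C b = Dom C a"
    and eq: "m \<cdot> a = z \<cdot> b"
  shows "p1 \<cdot> a = zero_mor C (Dom C a) X"
proof -
  define W Z where "W = Dom C a" and "Z = Dom C z"
  obtain PZ q1 q2 \<phi> where PZ: "binary_product C P Z PZ q1 q2" and \<phi>: "\<phi> \<in> hom C PZ (Cod C m)"
    "\<phi> \<cdot> binary_product.inj1 C P Z q1 q2 = m" "\<phi> \<cdot> binary_product.inj2 C P Z q1 q2 = z"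
    using mz m(3) Z_def by (auto elim: commuteE)
  interpret PZ: binary_product C P Z PZ q1 q2 by (rule PZ)
  have \<phi>: "\<phi> \<in> Ar C" "Dom C \<phi> = PZ" "Cod C \<phi> = Cod C m" "\<phi> \<cdot> PZ.inj1 = m" "\<phi> \<cdot> PZ.inj2 = z"
    using \<phi> by simp_all
  have zA: "z \<in> Ar C" "Dom C z = Z" "Cod C z = Cod C m"
    using mz Z_def unfolding commute_def by simp_all
  have ab: "a \<in> Ar C" "b \<in> Ar C" "Dom C a = W" "Dom C b = W" "Cod C a = P" "Cod C b = Z"
    using a b W_def Z_def by simp_all
  obtain XW c1 c2 where "binary_product C X W XW c1 c2"
    using obtain_product[of X W] product_Ob ab by (metis Dom_in_Ob)
  then interpret XW: binary_product C X W XW c1 c2 .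
  define \<psi> where "\<psi> = \<phi> \<cdot> PZ.tup (inj1 \<cdot> c1) (b \<cdot> c2)"
  have \<psi>: "\<psi> \<in> hom C XW (Cod C m)" unfolding \<psi>_def using ab \<phi> by simp
  have \<psi>1: "\<psi> \<cdot> XW.inj1 = m \<cdot> inj1" unfolding \<psi>_def using \<phi> ab m by (simp add: comp_rewrite[OF \<phi>(4)])
  have "\<psi> \<cdot> XW.inj2 = z \<cdot> b" unfolding \<psi>_def using \<phi> ab m by (simp add: comp_rewrite[OF \<phi>(5)])
  then have \<psi>2: "\<psi> \<cdot> XW.inj2 = m \<cdot> a" using eq by simp
  obtain g where g: "g \<in> hom C XW P" "m \<cdot> g = \<psi>"
    using XW.factor_through_mono[OF m(1), of P "Cod C m" \<psi> inj1 a] m \<psi> \<psi>1 \<psi>2 ab by auto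
  have gA: "g \<in> Ar C" "Dom C g = XW" "Cod C g = P" using g by simp_all
  have "m \<cdot> g \<cdot> XW.inj1 = m \<cdot> inj1" using gA m \<psi>1 by (simp add: comp_rewrite[OF g(2)])
  then have g1: "g \<cdot> XW.inj1 = inj1" using mono_cancel[OF m(1)] gA m by simp
  have "m \<cdot> g \<cdot> XW.inj2 = m \<cdot> a" using gA m \<psi>2 by (simp add: comp_rewrite[OF g(2)])
  then have g2: "g \<cdot> XW.inj2 = a" using mono_cancel[OF m(1)] gA ab m by simp
  have "p1 \<cdot> g = c1"
    using XW.strong_complete_proj1_unique[OF sc, of "p1 \<cdot> g"] gA g1 by simp
  then have "p1 \<cdot> g \<cdot> XW.inj2 = c1 \<cdot> XW.inj2" using gA by (intro comp_rewrite) simp_all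
  then show ?thesis using g2 unfolding W_def[symmetric] by simp
qed

lemma inj2_pullback:
  assumes z: "is_mono C z" "Cod C z = Cod C m" and m: "m \<in> Ar C" "Dom C m = P"
    and h: "h \<in> Ar C" "Dom C h = Y" "Cod C h = Dom C z" "z \<cdot> h = m \<cdot> inj2"
    and proj1_zero: "\<And>a b. a \<in> Ar C \<Longrightarrow> b \<in> Ar C \<Longrightarrow> Dom C b = Dom C a \<Longrightarrow> Cod C a = P \<Longrightarrow>
      Cod C b = Dom C z \<Longrightarrow> m \<cdot> a = z \<cdot> b \<Longrightarrow> p1 \<cdot> a = zero_mor C (Dom C a) X"
  shows "is_pullback C m z inj2 h"
proof (rule is_pullbackI)
  fix a b assume ab: "a \<in> Ar C" "b \<in> Ar C" "Dom C b = Dom C a" "Cod C a = Dom C m" "Cod C b = Dom C z"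
    "m \<cdot> a = z \<cdot> b"
  have zA: "z \<in> Ar C" using mono_in_Ar[OF z(1)] .
  have a_in_Y: "inj2 \<cdot> p2 \<cdot> a = a" using inj2_proj2[of a] proj1_zero[OF ab(1-3)] ab m by simp
  have "z \<cdot> h \<cdot> p2 \<cdot> a = z \<cdot> b"
    using h zA ab m a_in_Y by (simp add: comp_rewrite[OF h(4)])
  then have "h \<cdot> p2 \<cdot> a = b" using mono_cancel[OF z(1)] h ab m by simp
  then show "\<exists>u. u \<in> Ar C \<and> Dom C u = Dom C a \<and> Cod C u = Dom C inj2 \<and> inj2 \<cdot> u = a \<and> h \<cdot> u = b"
    using a_in_Y ab m by (intro exI[of _ "p2 \<cdot> a"]) simp
next
  fix u u' assume u: "u \<in> Ar C" "u' \<in> Ar C" "Dom C u' = Dom C u" "Cod C u = Dom C inj2"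
    "Cod C u' = Dom C inj2" "inj2 \<cdot> u = inj2 \<cdot> u'"
  then have "p2 \<cdot> inj2 \<cdot> u = p2 \<cdot> inj2 \<cdot> u'" by simp
  then show "u = u'" using u(1-5) by (simp add: comp_rewrite[OF inj2(5)])
qed (use z m h mono_in_Ar[OF z(1)] in simp_all)

lemma inj1_pullback:
  assumes z: "is_mono C z" "Cod C z = Cod C m" and m: "m \<in> Ar C" "Dom C m = P"
    and h: "h \<in> Ar C" "Dom C h = X" "Cod C h = Dom C z" "z \<cdot> h = m \<cdot> inj1"
    and proj2_zero: "\<And>a b. a \<in> Ar C \<Longrightarrow> b \<in> Ar C \<Longrightarrow> Dom C b = Dom C a \<Longrightarrow> Cod C a = P \<Longrightarrow>
      Cod C b = Dom C z \<Longrightarrow> m \<cdot> a = z \<cdot> b \<Longrightarrow> p2 \<cdot> a = zero_mor C (Dom C a) Y"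
  shows "is_pullback C m z inj1 h"
proof -
  interpret S: binary_product C Y X P p2 p1 by (rule swap)
  show ?thesis
    using S.inj2_pullback[OF z m h[folded swap_inj2] proj2_zero] unfolding swap_inj2 .
qed

lemma split_mono_of_projections:
  assumes m: "m \<in> Ar C" "Dom C m = P"
    and \<beta>: "\<beta> \<in> hom C (Cod C m) X" "\<beta> \<cdot> m = p1" and \<alpha>: "\<alpha> \<in> hom C (Cod C m) Y" "\<alpha> \<cdot> m = p2"
  shows "is_split_mono C m"
proof -
  have "tup \<beta> \<alpha> \<cdot> m = tup (\<beta> \<cdot> m) (\<alpha> \<cdot> m)" using \<alpha> \<beta> m by (intro tuple_comp) simp_all
  then have "tup \<beta> \<alpha> \<cdot> m = Idm C P" using \<alpha> \<beta> by simp
  then show ?thesis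
    unfolding is_split_mono_def using \<alpha> \<beta> m by (intro conjI bexI[of _ "tup \<beta> \<alpha>"]) simp_all
qed

lemma retraction_onto_abelian_factor:
  assumes centralizers: "\<forall>m. bourn_normal C m \<longrightarrow> (\<exists>z. is_centralizer C m z \<and> bourn_normal C z)"
    and ab: "abelian_obj C Y" and cs: "complete_star C Y" and sc: "strong_complete C X"
    and no_arrows: "hom C X Y = {zero_mor C X Y}"
    and bn: "bourn_normal C m" and dm: "Dom C m = P"
  obtains \<alpha> where "\<alpha> \<in> hom C (Cod C m) Y" "\<alpha> \<cdot> m = p2"
proof -
  have mono: "is_mono C m" using bn unfolding bourn_normal_def by blast
  have mA: "m \<in> Ar C" "Dom C m = P" using mono_in_Ar[OF mono] dm by simp_all
  obtain z where cz: "is_centralizer C m z" and bnz: "bourn_normal C z" using centralizers bn by blast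
  have zmono: "is_mono C z" using bnz unfolding bourn_normal_def by blast
  have mz: "commute C m z" using cz unfolding is_centralizer_def by blast
  then have zA: "Cod C z = Cod C m" unfolding commute_def by simp
  have "m \<cdot> inj2 \<in> Ar C" "commute C m (m \<cdot> inj2)"
    using commute_with_abelian_injection[OF ab mA] mA by simp_all
  then have "\<exists>!h. h \<in> hom C (Dom C (m \<cdot> inj2)) (Dom C z) \<and> z \<cdot> h = m \<cdot> inj2"
    using cz unfolding is_centralizer_def by blast
  then obtain h where h: "h \<in> Ar C" "Dom C h = Y" "Cod C h = Dom C z" "z \<cdot> h = m \<cdot> inj2"
    using mA by auto
  have "is_pullback C m z inj2 h"
  proof (rule inj2_pullback[OF zmono zA mA h])
    fix a b assume "a \<in> Ar C" "b \<in> Ar C" "Dom C b = Dom C a" "Cod C a = P" "Cod C b = Dom C z"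
      "m \<cdot> a = z \<cdot> b"
    then show "p1 \<cdot> a = zero_mor C (Dom C a) X" by (intro commuting_arrow_proj1_zero[OF sc mono mA mz])
  qed
  then have "bourn_normal C (m \<cdot> inj2)" by (rule bourn_normal_meet[OF bn bnz])
  then have "is_split_mono C (m \<cdot> inj2)" using cs mA unfolding complete_star_def by simp
  then obtain \<alpha> where \<alpha>: "\<alpha> \<in> hom C (Cod C m) Y" "\<alpha> \<cdot> m \<cdot> inj2 = Idm C Y"
    using mA unfolding is_split_mono_def by auto
  have "\<alpha> \<cdot> m = p2"
  proof (rule injections_jointly_epic)
    have "(\<alpha> \<cdot> m) \<cdot> inj1 \<in> hom C X Y" using \<alpha> mA by simp
    then show "(\<alpha> \<cdot> m) \<cdot> inj1 = p2 \<cdot> inj1" using no_arrows by simp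
    show "(\<alpha> \<cdot> m) \<cdot> inj2 = p2 \<cdot> inj2" using \<alpha> mA by simp
  qed (use \<alpha> mA in simp_all)
  then show ?thesis using that \<alpha> by blast
qed

lemma retraction_onto_first_factor:
  assumes sc: "strong_complete C X" and bn: "bourn_normal C m" and dm: "Dom C m = P"
    and \<alpha>: "\<alpha> \<in> hom C (Cod C m) Y" "\<alpha> \<cdot> m = p2"
  obtains \<beta> where "\<beta> \<in> hom C (Cod C m) X" "\<beta> \<cdot> m = p1"
proof -
  have mA: "m \<in> Ar C" "Dom C m = P" using bn dm unfolding bourn_normal_def is_mono_def by simp_all
  have \<alpha>A: "\<alpha> \<in> Ar C" "Dom C \<alpha> = Cod C m" "Cod C \<alpha> = Y" using \<alpha> by simp_all
  obtain \<kappa> where ker: "is_kernel C \<kappa> \<alpha>" using kernel_exists[OF \<alpha>A(1)] .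
  have bnk: "bourn_normal C \<kappa>" by (rule kernel_is_bourn_normal[OF ker])
  have \<kappa>: "\<kappa> \<in> Ar C" "Cod C \<kappa> = Cod C m" "\<alpha> \<cdot> \<kappa> = zero_mor C (Dom C \<kappa>) Y"
    using kernelD[OF ker] \<alpha>A by simp_all
  have "\<alpha> \<cdot> m \<cdot> inj1 = zero_mor C X Y" using \<alpha>A mA by (simp add: comp_rewrite[OF \<alpha>(2)])
  then obtain i where i: "i \<in> Ar C" "Dom C i = X" "Cod C i = Dom C \<kappa>" "\<kappa> \<cdot> i = m \<cdot> inj1"
    using kernel_factor[OF ker, of "m \<cdot> inj1"] mA \<alpha>A by auto
  have "is_pullback C m \<kappa> inj1 i"
  proof (rule inj1_pullback[OF kernel_is_mono[OF ker] \<kappa>(2) mA i])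
    fix a b assume ab: "a \<in> Ar C" "b \<in> Ar C" "Dom C b = Dom C a" "Cod C a = P" "Cod C b = Dom C \<kappa>"
      and eq: "m \<cdot> a = \<kappa> \<cdot> b"
    have "p2 \<cdot> a = \<alpha> \<cdot> m \<cdot> a" using ab mA \<alpha>A by (simp add: comp_rewrite[OF \<alpha>(2)])
    also have "\<dots> = \<alpha> \<cdot> \<kappa> \<cdot> b" using eq by simp
    also have "\<dots> = zero_mor C (Dom C a) Y" using ab \<kappa> \<alpha>A by (simp add: comp_rewrite[OF \<kappa>(3)])
    finally show "p2 \<cdot> a = zero_mor C (Dom C a) Y" .
  qed
  then have "bourn_normal C (m \<cdot> inj1)" by (rule bourn_normal_meet[OF bn bnk])
  then have "is_split_mono C (m \<cdot> inj1)"
    using strong_complete_imp_complete_star[OF sc] mA unfolding complete_star_def by simp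
  then obtain \<beta> where \<beta>: "\<beta> \<in> hom C (Cod C m) X" "\<beta> \<cdot> m \<cdot> inj1 = Idm C X"
    using mA unfolding is_split_mono_def by auto
  then have "\<beta> \<cdot> m = p1" using strong_complete_proj1_unique[OF sc, of "\<beta> \<cdot> m"] mA by simp
  then show ?thesis using that \<beta> by blast
qed

end

theorem proposition4p17:
  fixes C :: "('o, 'm) cat" and A B :: 'o
  assumes "protomodular C"
    and "\<forall>m. bourn_normal C m \<longrightarrow> (\<exists>z. is_centralizer C m z \<and> bourn_normal C z)"
    and "abelian_obj C A" and "complete_star C A"
    and "strong_complete C B"
    and "hom C B A = {zero_mor C B A}"
  shows "\<forall>P p1 p2. is_product C B A P p1 p2 \<longrightarrow> complete_star C P"
proof (intro allI impI)
  fix P p1 p2 assume "is_product C B A P p1 p2"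
  then interpret binary_product C B A P p1 p2
    using protomodular_category.binary_productI[OF protomodular_category.intro[OF assms(1)]] by blast
  show "complete_star C P"
    unfolding complete_star_def
  proof (intro conjI allI impI)
    show "P \<in> Ob C" by simp
    fix m assume m: "bourn_normal C m \<and> Dom C m = P"
    then obtain \<alpha> where \<alpha>: "\<alpha> \<in> hom C (Cod C m) A" "\<alpha> \<cdot> m = p2"
      using retraction_onto_abelian_factor[OF assms(2-6)] by blast
    then obtain \<beta> where \<beta>: "\<beta> \<in> hom C (Cod C m) B" "\<beta> \<cdot> m = p1"
      using retraction_onto_first_factor[OF assms(5)] m by blast
    show "is_split_mono C m"
      using split_mono_of_projections[OF _ _ \<beta> \<alpha>] m unfolding bourn_normal_def is_mono_def by blast
  qed
qed

end
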